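(* Let $d\ge1$, $\alpha\in(0,2)$, $\beta\in(0,1)$, let $l$ be the maximal integer strictly less than $\alpha$, and let $\psi_\alpha(x,p)=|p|^\alpha w_\mu(x,p/|p|)$, $w_\mu(x,p)=\int_{\mathbb S^{d-1}}|(p,s)|^\alpha\mu(x,ds)$, where $\mu(x,\cdot)$ has a density bounded below by some $\mu_0>0$, $w_\mu$ is $\gamma$-Hölder in $x$ with values in a compact subset of $(0,\infty)$, and $w_\mu$ is $q$-times differentiable in $x$ with each of these derivatives $(d+1+(l+q)(\alpha+1))$-times continuously differentiable in $p$, all bounds uniform in $x,p$. Let $G_{\psi_\alpha,x}$ be the Green's function of $\partial_su=-\psi_\alpha(x,-i\nabla)u$, $G^{(\beta)}_{\psi_\alpha,x}(t,x,y)=\frac1\beta\int_0^\infty G_{\psi_\alpha,x}(t^\beta z,x,y)z^{-1-1/\beta}w_\beta(z^{-1/\beta})dz$, and $\Omega=|x-y|^\alpha t^{-\beta}$. Then there is $C>0$ such that for all $k\le l$, all indices $i_1,\dots,i_k$, and all $(t,x,y)\in(0,1)\times\mathbb R^d\times\mathbb R^d$, writing $D^k=\frac{\partial^k}{\partial x_{i_1}\cdots\partial x_{i_k}}$: (i) if $\Omega\le1$: $|D^kG^{(\beta)}_{\psi_\alpha,x}(t,x,y)|\le C t^{-(d+k)\beta/\alpha}$ if $d+k<\alpha$, $\le Ct^{-\beta}(|\log\Omega|+1)$ if $d+k=\alpha$, $\le Ct^{-(d+k)\beta/\alpha}\Omega^{1-(d+k)/\alpha}$ if $d+k>\alpha$;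 (ii) if $1\le\Omega\le t^{-\beta}$: $|D^kG^{(\beta)}_{\psi_\alpha,x}(t,x,y)|\le Ct^{-(d+k)\beta/\alpha}\Omega^{-1-(d+k)/\alpha}$; (iii) if $\Omega\ge t^{-\beta}$: $|D^kG^{(\beta)}_{\psi_\alpha,x}(t,x,y)|\le Ct^{-d\beta/\alpha}\Omega^{-1-d/\alpha}$.
   Context: For $\beta\in(0,1)$, $w_\beta$ denotes the probability density on $(0,\infty)$ of the totally positively skewed normalised $\beta$-stable law, i.e. $\int_0^\infty e^{-\lambda x}w_\beta(x)\,dx=e^{-\lambda^\beta}$. $G^{(\beta)}_{\psi_\alpha,x}$ is the Green's function of $D^\beta_0u=-\psi_\alpha(x,-i\nabla)u$ with $D^\beta_0$ the Caputo derivative of order $\beta$ in time. Known facts used as input: for each $T_0>0$ and $k\le l$, $|D^kG_{\psi_\alpha,x}(s,x,y)|\le C\min(s|x-y|^{-d-k-\alpha},s^{-(d+k)/\alpha})$ for $s\in(0,T_0)$, and $|D^kG_{\psi_\alpha,x}(s,x,y)|\le e^{Cs}\max(s^{-k/\alpha},1)\min(s|x-y|^{-d-\alpha},s^{-d/\alpha})$ for all $s>0$. *)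

theory Defs
  imports "HOL-Analysis.Analysis"
begin

definition pdiff :: "'n::finite \<Rightarrow> (real^'n \<Rightarrow> real) \<Rightarrow> real^'n \<Rightarrow> real" where
  "pdiff i f x = deriv (\<lambda>h. f (x + h *\<^sub>R axis i 1)) 0"

fun Dk :: "'n::finite list \<Rightarrow> (real^'n \<Rightarrow> real) \<Rightarrow> real^'n \<Rightarrow> real" where
  "Dk [] f = f"
| "Dk (i # is) f = pdiff i (Dk is f)"

text \<open>w is the density on (0,infinity) of the totally positively skewed normalised beta-stable law:
  a probability density whose Laplace transform is exp(-lambda^beta).\<close>
definition stable_density :: "real \<Rightarrow> (real \<Rightarrow> real) \<Rightarrow> bool" where
  "stable_density \<beta> w \<longleftrightarrow>
     w \<in> borel_measurable borel \<and> (\<forall>x>0. 0 \<le> w x) \<and>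
     set_integrable lborel {0<..} w \<and>
     (\<forall>r\<ge>0. (LINT x:{0<..}|lborel. exp (- r * x) * w x) = exp (- (r powr \<beta>)))"

definition Gbeta ::
  "(real \<Rightarrow> real^'n \<Rightarrow> real^'n \<Rightarrow> real) \<Rightarrow> (real \<Rightarrow> real) \<Rightarrow> real \<Rightarrow> real \<Rightarrow> real^'n \<Rightarrow> real^'n \<Rightarrow> real"
  where
  "Gbeta G w \<beta> t x y = (1 / \<beta>) *
     (LINT z:{0<..}|lborel. G (t powr \<beta> * z) x y * z powr (-1 - 1/\<beta>) * w (z powr (-1/\<beta>)))"

end

theory Submission
  imports Defs
begin

text \<open>Let \<open>U\<close> have density \<open>w\<close>. The substitution \<open>z = u powr (- \<beta>)\<close> turns the definition
  of \<open>Gbeta\<close> into the subordination formula \<open>Gbeta G w \<beta> t x y = E G (t^\<beta> U^-\<beta>) x y\<close>, and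
  for \<open>x \<noteq> y\<close> an \<open>x\<close>-derivative passes under the expectation by dominated convergence.
  The law of \<open>U\<close> enters only through its Laplace transform \<open>E exp (- r U) = exp (- r^\<beta>)\<close>:
  it gives the tail bound \<open>P (U \<ge> a) \<le> c a^-\<beta>\<close>, finiteness of all exponential moments of
  \<open>U^-\<beta>\<close>, and, by dyadic decomposition, truncated moments \<open>E [U^q; U < a]\<close> that are bounded,
  logarithmic in \<open>a\<close>, or of order \<open>a^(q - \<beta>)\<close> according as \<open>q < \<beta>\<close>, \<open>q = \<beta>\<close>, \<open>q > \<beta>\<close>.
  Feeding the short-time bounds on \<open>G\<close> (subordinated time \<open>t^\<beta> U^-\<beta> < 1\<close>) and the
  exponential ones (otherwise) into these moments yields the three regimes in \<open>\<Omega>\<close>.\<close>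

lemma ennreal_le_suminf_term: "x \<le> g n \<Longrightarrow> ennreal x \<le> (\<Sum>n. ennreal (g n))"
proof -
  assume "x \<le> g n"
  then have "ennreal x \<le> ennreal (g n)" by (rule ennreal_leI)
  also have "\<dots> = (\<Sum>m\<in>{n}. ennreal (g m))" by simp
  also have "\<dots> \<le> (\<Sum>m. ennreal (g m))" by (rule sum_le_suminf) auto
  finally show ?thesis .
qed

lemma dyadic_bracket: assumes "(1::real) \<le> v" shows "\<exists>n::nat. 2^n \<le> v \<and> v < 2^(Suc n)"
proof -
  obtain N where N: "v < 2^N" using real_arch_pow[of 2 v] by auto
  define n0 where "n0 = (LEAST n. v < (2::real)^n)"
  have n0: "v < 2^n0" unfolding n0_def by (rule LeastI[of "\<lambda>n. v < (2::real)^n", OF N])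
  have "n0 \<noteq> 0" proof assume "n0 = 0" then show False using n0 assms by simp qed
  then obtain n where n: "n0 = Suc n" by (cases n0) auto
  have "\<not> v < 2^n" using not_less_Least[of n "\<lambda>n. v < (2::real)^n"] n unfolding n0_def by simp
  then show ?thesis using n0 n by (intro exI[of _ n]) auto
qed

lemma dyadic_cover: assumes a: "1 \<le> a"
  obtains J :: nat where "a \<le> 2^J" "2^J \<le> 2 * a" "real J \<le> 1 + ln a / ln 2"
proof -
  from dyadic_bracket[OF a] obtain n :: nat where n: "2^n \<le> a" "a < 2^Suc n" by blast
  have "real n = log 2 (2^n)" by simp
  also have "\<dots> \<le> log 2 a" using n(1) a by (subst log_le_cancel_iff) auto
  finally have "real (Suc n) \<le> 1 + ln a / ln 2" by (simp add: log_def)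
  then show ?thesis using n by (intro that[of "Suc n"]) auto
qed

lemma dyadic_term_eq: "2 powr (real (Suc j) * q) * 2 powr (- real j * \<beta>) = 2 powr q * (2 powr (q - \<beta>)) ^ j"
proof -
  have "(2 powr (q - \<beta>)) ^ j = 2 powr ((q - \<beta>) * real j)"
    by (simp add: powr_realpow[symmetric] powr_powr)
  then show ?thesis by (simp add: powr_add[symmetric] algebra_simps)
qed

lemma powr_le_one_iff: fixes r a :: real assumes a: "0 < a" and r: "0 \<le> r" shows "r powr a \<le> 1 \<longleftrightarrow> r \<le> 1"
proof
  assume "r \<le> 1" then show "r powr a \<le> 1" using powr_mono2[of a r 1] a r by simp
next
  assume h: "r powr a \<le> 1"
  show "r \<le> 1"
  proof (rule ccontr)
    assume "\<not> r \<le> 1"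
    then have "1 powr a < r powr a" using a by (intro powr_less_mono2) auto
    then show False using h by simp
  qed
qed

lemma one_le_powr_neg:
  fixes x c :: real
  assumes "0 < x" "x \<le> 1" "0 \<le> c"
  shows "1 \<le> x powr (- c)"
  using powr_mono'[of "- c" 0 x] assms by simp

lemma le_const_mult:
  fixes D K T C :: real
  assumes "D \<le> K * T" "0 \<le> T" "\<bar>K\<bar> \<le> C"
  shows "D \<le> C * T"
  using assms abs_ge_self[of K] by (meson order_trans mult_right_mono)

lemma offdiag_scaling:
  fixes \<rho> t \<alpha> \<beta> m :: real
  assumes "0 < \<rho>" "0 < t" "\<alpha> \<noteq> 0"
  shows "t powr \<beta> * \<rho> powr (- m - \<alpha>)
       = t powr (- m * \<beta> / \<alpha>) * (\<rho> powr \<alpha> * t powr (- \<beta>)) powr (- 1 - m / \<alpha>)"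
proof -
  have "\<alpha> * (- 1 - m / \<alpha>) = - m - \<alpha>" "- \<beta> * (- 1 - m / \<alpha>) = \<beta> + m * \<beta> / \<alpha>"
    using assms(3) by (simp_all add: field_simps)
  then have "(\<rho> powr \<alpha> * t powr (- \<beta>)) powr (- 1 - m / \<alpha>) = \<rho> powr (- m - \<alpha>) * t powr (\<beta> + m * \<beta> / \<alpha>)"
    using assms by (simp add: powr_mult powr_powr)
  moreover have "t powr (- m * \<beta> / \<alpha>) * t powr (\<beta> + m * \<beta> / \<alpha>) = t powr \<beta>"
    by (simp add: powr_add[symmetric])
  ultimately show ?thesis by (simp add: mult_ac)
qed

lemma offdiag_scaling_sq:
  fixes \<rho> t \<alpha> \<beta> m :: real
  assumes "0 < \<rho>" "0 < t" "\<alpha> \<noteq> 0"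
  defines "\<Omega> \<equiv> \<rho> powr \<alpha> * t powr (- \<beta>)"
  shows "t powr \<beta> * \<rho> powr (- m - \<alpha>) * \<Omega>\<^sup>2 = (t powr \<beta>) powr (- (m / \<alpha>)) * \<Omega> powr (1 - m / \<alpha>)"
proof -
  have "\<Omega> > 0" using assms by (simp add: \<Omega>_def)
  then have "\<Omega> powr (- 1 - m / \<alpha>) * \<Omega>\<^sup>2 = \<Omega> powr (- 1 - m / \<alpha>) * \<Omega> powr 2" by simp
  also have "\<dots> = \<Omega> powr (1 - m / \<alpha>)" by (simp only: powr_add[symmetric]) simp
  finally have \<Omega>_pow: "\<Omega> powr (- 1 - m / \<alpha>) * \<Omega>\<^sup>2 = \<Omega> powr (1 - m / \<alpha>)" .
  have "t powr (- m * \<beta> / \<alpha>) = (t powr \<beta>) powr (- (m / \<alpha>))" by (simp add: powr_powr algebra_simps)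
  then have "t powr \<beta> * \<rho> powr (- m - \<alpha>) = (t powr \<beta>) powr (- (m / \<alpha>)) * \<Omega> powr (- 1 - m / \<alpha>)"
    using offdiag_scaling[OF assms(1-3), of \<beta> m] by (simp add: \<Omega>_def)
  then show ?thesis using \<Omega>_pow by (metis mult.assoc)
qed

lemma mvt_abs_bound:
  fixes g g' :: "real \<Rightarrow> real"
  assumes der: "\<And>h. \<bar>h\<bar> < \<delta> \<Longrightarrow> (g has_real_derivative g' h) (at h)"
    and bd: "\<And>h. \<bar>h\<bar> < \<delta> \<Longrightarrow> \<bar>g' h\<bar> \<le> B"
    and h: "\<bar>h\<bar> < \<delta>"
  shows "\<bar>g h - g 0\<bar> \<le> B * \<bar>h\<bar>"
proof (cases h "0::real" rule: linorder_cases)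
  case less
  obtain z where z: "h < z" "z < 0" "g 0 - g h = (0 - h) * g' z"
    using MVT2[OF less, of g g'] der h by force
  have "\<bar>z\<bar> < \<delta>" using z h by auto
  then show ?thesis using z bd[of z] by (simp add: abs_mult mult.commute mult_left_mono abs_minus_commute)
next
  case greater
  obtain z where z: "0 < z" "z < h" "g h - g 0 = (h - 0) * g' z"
    using MVT2[OF greater, of g g'] der h by force
  have "\<bar>z\<bar> < \<delta>" using z h by auto
  then show ?thesis using z bd[of z] by (simp add: abs_mult mult.commute mult_left_mono)
qed simp

lemma set_lebesgue_integral_eq_integral_lborel:
  fixes h :: "real \<Rightarrow> real"
  assumes m: "(\<lambda>x. indicator S x * h x) \<in> borel_measurable borel"
  shows "set_integrable lborel S h \<longleftrightarrow> h absolutely_integrable_on S"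
    "h absolutely_integrable_on S \<Longrightarrow> (LINT x:S|lborel. h x) = integral S h"
proof -
  have m': "(\<lambda>x. indicator S x *\<^sub>R h x) \<in> lborel \<rightarrow>\<^sub>M borel" using m by simp
  show e: "set_integrable lborel S h \<longleftrightarrow> h absolutely_integrable_on S"
    unfolding set_integrable_def using integrable_completion[OF m'] by simp
  assume "h absolutely_integrable_on S"
  then show "(LINT x:S|lborel. h x) = integral S h"
    using set_lebesgue_integral_eq_integral(2)[of S h] integral_completion[OF m']
    by (simp add: set_lebesgue_integral_def)
qed

lemma set_integral_neg_powr_substitution:
  fixes f :: "real \<Rightarrow> real" and \<beta> :: real
  assumes \<beta>: "0 < \<beta>" and fm: "(\<lambda>z. indicator {0<..} z * f z) \<in> borel_measurable borel"
  shows "(LINT z:{0<..}|lborel. f z) = (LINT u:{0<..}|lborel. \<beta> * u powr (- \<beta> - 1) * f (u powr (- \<beta>)))"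
proof -
  define S :: "real set" where "S = {0<..}"
  define g where "g u = u powr (- \<beta>)" for u :: real
  define g' where "g' u = - \<beta> * u powr (- \<beta> - 1)" for u :: real
  define h where "h u = \<beta> * u powr (- \<beta> - 1) * f (u powr (- \<beta>))" for u
  have der: "(g has_field_derivative g' u) (at u within S)" if "u \<in> S" for u
    unfolding g_def g'_def using has_real_derivative_powr[of u "- \<beta>"] that
    by (auto simp: S_def intro: has_field_derivative_at_within)
  have inj: "inj_on g S"
  proof (rule inj_onI)
    fix x y assume "x \<in> S" "y \<in> S" "g x = g y"
    then have "(g x) powr (-1/\<beta>) = (g y) powr (-1/\<beta>)" by simp
    then show "x = y" using \<open>x \<in> S\<close> \<open>y \<in> S\<close> \<beta> by (simp add: g_def S_def powr_powr)
  qed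
  have "z = g (z powr (-1/\<beta>))" if "z \<in> S" for z using that \<beta> by (simp add: g_def S_def powr_powr)
  then have gS: "g ` S = S" unfolding S_def by (force simp: g_def)
  have h_eq: "\<bar>g' u\<bar> * f (g u) = h u" if "u \<in> S" for u
    using that \<beta> by (simp add: S_def g_def g'_def h_def abs_mult)
  have cv: "h absolutely_integrable_on S \<and> integral S h = I \<longleftrightarrow> f absolutely_integrable_on S \<and> integral S f = I" for I
  proof -
    have "(\<lambda>u. \<bar>g' u\<bar> * f (g u)) absolutely_integrable_on S \<longleftrightarrow> h absolutely_integrable_on S"
      unfolding set_integrable_def using h_eq
      by (intro arg_cong[where f="integrable lebesgue"] ext) (auto simp: indicator_def)
    moreover have "integral S (\<lambda>u. \<bar>g' u\<bar> * f (g u)) = integral S h"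
      using h_eq by (intro integral_cong) auto
    ultimately show ?thesis
      using has_absolute_integral_change_of_variables_1'[OF _ der inj, of f I] gS by (simp add: S_def)
  qed
  have fm': "(\<lambda>z. indicator S z * f z) \<in> borel_measurable borel" using fm by (simp add: S_def)
  have hm: "(\<lambda>u. indicator S u * h u) \<in> borel_measurable borel"
  proof -
    have "(\<lambda>u. indicator {0<..} u * (\<beta> * u powr (- \<beta> - 1) * (indicator {0<..} (u powr (- \<beta>)) * f (u powr (- \<beta>)))))
        \<in> borel_measurable borel"
      by (intro borel_measurable_times borel_measurable_const measurable_compose[OF _ fm]) measurable
    moreover have "indicator {0<..} u * (\<beta> * u powr (- \<beta> - 1) * (indicator {0<..} (u powr (- \<beta>)) * f (u powr (- \<beta>))))
        = indicator S u * h u" for u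
      by (auto simp: S_def h_def indicator_def)
    ultimately show ?thesis by simp
  qed
  show ?thesis unfolding h_def[symmetric] S_def[symmetric]
  proof (cases "f absolutely_integrable_on S")
    case True
    then show "(LINT z:S|lborel. f z) = (LINT u:S|lborel. h u)"
      using cv[of "integral S f"] set_lebesgue_integral_eq_integral_lborel[OF fm']
        set_lebesgue_integral_eq_integral_lborel[OF hm] by simp
  next
    case False
    then have "\<not> set_integrable lborel S h" "\<not> set_integrable lborel S f"
      using cv[of "integral S h"] set_lebesgue_integral_eq_integral_lborel(1)[OF fm']
        set_lebesgue_integral_eq_integral_lborel(1)[OF hm] by auto
    then show "(LINT z:S|lborel. f z) = (LINT u:S|lborel. h u)"
      unfolding set_integrable_def set_lebesgue_integral_def by (simp add: not_integrable_integral_eq)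
  qed
qed

lemma pdiff_has_real_derivative:
  fixes g :: "real^'n \<Rightarrow> real"
  assumes dg: "g differentiable (at (x + h0 *\<^sub>R axis i 1))"
  shows "((\<lambda>h. g (x + h *\<^sub>R axis i 1)) has_real_derivative pdiff i g (x + h0 *\<^sub>R axis i 1)) (at h0)"
proof -
  define e :: "real^'n" where "e = axis i 1"
  obtain D where D: "(g has_derivative D) (at (x + h0 *\<^sub>R e))" using dg unfolding e_def differentiable_def by blast
  have lin: "linear D" by (rule has_derivative_linear[OF D])
  have sc: "D (k *\<^sub>R e) = k * D e" for k using linear_scale[OF lin] by simp
  have gen: "((\<lambda>h. g (z + h *\<^sub>R e)) has_real_derivative D e) (at h1)" if z: "z + h1 *\<^sub>R e = x + h0 *\<^sub>R e" for z h1
  proof -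
    have inner: "((\<lambda>h. z + h *\<^sub>R e) has_derivative (\<lambda>k. k *\<^sub>R e)) (at h1)"
      by (auto intro!: derivative_eq_intros)
    have "((\<lambda>h. g (z + h *\<^sub>R e)) has_derivative (\<lambda>k. D (k *\<^sub>R e))) (at h1)"
      using has_derivative_compose[OF inner, of g D] D z by simp
    moreover have "(\<lambda>k. D (k *\<^sub>R e)) = (*) (D e)" by (rule ext) (simp add: sc mult.commute)
    ultimately show ?thesis unfolding has_field_derivative_def by simp
  qed
  have "pdiff i g (x + h0 *\<^sub>R axis i 1) = D e"
    unfolding pdiff_def e_def[symmetric] using gen[of "x + h0 *\<^sub>R e" 0] by (intro DERIV_imp_deriv) simp
  then show ?thesis using gen[of x h0] unfolding e_def by simp
qed

lemma summable_exp_neg_two_powr: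
  fixes \<beta> :: real
  assumes "0 < \<beta>"
  shows "summable (\<lambda>k::nat. exp (- (2 powr (real k * \<beta>))))"
proof (rule summable_comparison_test'[OF summable_geometric[of "exp (- (2 powr \<beta> - 1))"]])
  define h where "h = 2 powr \<beta> - 1"
  have h0: "h > 0" unfolding h_def using assms by simp
  show "norm (exp (- (2 powr (real k * \<beta>)))) \<le> exp (- (2 powr \<beta> - 1)) ^ k" for k :: nat
  proof -
    have "1 + real k * h \<le> (1 + h) ^ k" by (rule Bernoulli_inequality) (use h0 in simp)
    also have "(1 + h) ^ k = 2 powr (real k * \<beta>)" unfolding h_def
      by (simp add: powr_realpow[symmetric] powr_powr mult.commute)
    finally have "real k * h \<le> 2 powr (real k * \<beta>)" by simp
    then have "exp (- (2 powr (real k * \<beta>))) \<le> exp (- h) ^ k"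
      by (simp add: exp_of_nat_mult[symmetric] mult.commute)
    then show ?thesis by (simp add: h_def)
  qed
qed (use assms in simp)

lemma dyadic_neg_powr_bound:
  fixes u \<beta> :: real
  assumes "0 < u" "u < 1" "0 \<le> \<beta>"
  obtains k :: nat where "2 ^ k * u \<le> 1" "u powr (- \<beta>) \<le> 2 powr (real (Suc k) * \<beta>)"
proof -
  obtain k :: nat where k: "2^k \<le> 1/u" "1/u < 2^Suc k"
    using dyadic_bracket[of "1/u"] assms by auto
  have "u powr (- \<beta>) = (1/u) powr \<beta>" using assms by (simp add: powr_minus_divide powr_divide)
  also have "\<dots> \<le> (2^Suc k) powr \<beta>" using k assms by (intro powr_mono2) auto
  also have "\<dots> = 2 powr (real (Suc k) * \<beta>)"
    by (simp add: powr_realpow[symmetric] powr_powr del: power_Suc)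
  finally show ?thesis using that k(1) assms by (simp add: pos_le_divide_eq)
qed

definition dyadic_majorant :: "(nat \<Rightarrow> bool) \<Rightarrow> real \<Rightarrow> nat \<Rightarrow> real \<Rightarrow> real" where
  "dyadic_majorant P q n u = (case n of 0 \<Rightarrow> 1
     | Suc j \<Rightarrow> (if P j then 2 powr (real (Suc j) * q) else 0) * indicator {2^j..} u)"

lemma le_suminf_dyadic_majorant:
  fixes v u q :: real
  assumes q: "0 < q" and u: "0 < u" and v: "0 \<le> v" "v \<le> u powr q"
    and P: "\<And>j. 1 \<le> u \<Longrightarrow> v \<noteq> 0 \<Longrightarrow> 2^j \<le> u \<Longrightarrow> P j"
  shows "ennreal v \<le> (\<Sum>n. ennreal (dyadic_majorant P q n u))"
proof (cases "1 \<le> u \<and> v \<noteq> 0")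
  case False
  have "v \<le> 1"
  proof (cases "1 \<le> u")
    case True then show ?thesis using False by simp
  next
    case False
    then have "u powr q \<le> 1" using u q powr_mono2[of q u 1] by simp
    then show ?thesis using v by simp
  qed
  then show ?thesis
    by (intro ennreal_le_suminf_term[of _ "\<lambda>n. dyadic_majorant P q n u" 0]) (simp add: dyadic_majorant_def)
next
  case True
  obtain k :: nat where k: "2^k \<le> u" "u < 2^Suc k" using dyadic_bracket[of u] True by blast
  have "v \<le> (2^Suc k) powr q" using v k u q by (meson order.trans less_imp_le powr_mono2 q)
  also have "\<dots> = dyadic_majorant P q (Suc k) u"
    using P[of k] True k by (simp add: dyadic_majorant_def powr_realpow[symmetric] powr_powr del: power_Suc)
  finally show ?thesis by (rule ennreal_le_suminf_term)
qed

section \<open>Expectations under the stable law\<close>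

text \<open>\<open>density_expect w f\<close> is \<open>E f(U)\<close> for \<open>U\<close> with density \<open>w\<close> on \<open>(0, \<infinity>)\<close>; like every
  Bochner integral it is \<open>0\<close> when \<open>f(U)\<close> is not integrable.\<close>

definition density_expect :: "(real \<Rightarrow> real) \<Rightarrow> (real \<Rightarrow> real) \<Rightarrow> real" where
  "density_expect w f = (LINT u:{0<..}|lborel. f u * w u)"
definition density_integrable :: "(real \<Rightarrow> real) \<Rightarrow> (real \<Rightarrow> real) \<Rightarrow> bool" where
  "density_integrable w f \<longleftrightarrow> set_integrable lborel {0<..} (\<lambda>u. f u * w u)"

locale stable_law =
  fixes \<beta> :: real and w :: "real \<Rightarrow> real"
  assumes density: "stable_density \<beta> w" and beta_pos: "0 < \<beta>" and beta_lt_1: "\<beta> < 1"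
begin

lemma w_measurable[measurable]: "w \<in> borel_measurable borel"
  using density by (simp add: stable_density_def)
lemma w_nonneg: "u > 0 \<Longrightarrow> 0 \<le> w u"
  using density by (simp add: stable_density_def)
lemma w_set_integrable: "set_integrable lborel {0<..} w"
  using density by (simp add: stable_density_def)
lemma w_laplace: "r \<ge> 0 \<Longrightarrow> (LINT x:{0<..}|lborel. exp (- r * x) * w x) = exp (- (r powr \<beta>))"
  using density by (simp add: stable_density_def)

lemma density_integrable_bound:
  assumes "density_integrable w g" "(\<lambda>u. indicator {0<..} u * f u) \<in> borel_measurable borel"
    "\<And>u. u > 0 \<Longrightarrow> \<bar>f u\<bar> \<le> g u"
  shows "density_integrable w f"
  unfolding density_integrable_def
proof (rule set_integrable_bound[OF assms(1)[unfolded density_integrable_def]])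
  have "(\<lambda>u. indicator {0<..} u * f u * w u) \<in> borel_measurable borel"
    using assms(2) by measurable
  then show "set_borel_measurable lborel {0<..} (\<lambda>u. f u * w u)"
    unfolding set_borel_measurable_def by (simp add: mult.assoc)
  show "AE x in lborel. x \<in> {0<..} \<longrightarrow> norm (f x * w x) \<le> norm (g x * w x)"
  proof (intro AE_I2 impI)
    fix x :: real assume "x \<in> {0<..}"
    then have "\<bar>f x\<bar> \<le> \<bar>g x\<bar>" "0 \<le> w x" using assms(3) w_nonneg by force+
    then show "norm (f x * w x) \<le> norm (g x * w x)"
      by (simp add: abs_mult mult_right_mono)
  qed
qed

lemma density_expect_nonneg:
  assumes "\<And>u. u > 0 \<Longrightarrow> 0 \<le> f u"
  shows "0 \<le> density_expect w f"
  unfolding density_expect_def set_lebesgue_integral_def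
  by (rule integral_nonneg_AE) (auto simp: assms w_nonneg indicator_def)

lemma density_expect_abs_le:
  assumes "density_integrable w g" "\<And>u. u > 0 \<Longrightarrow> \<bar>f u\<bar> \<le> g u"
  shows "\<bar>density_expect w f\<bar> \<le> density_expect w g"
proof (cases "density_integrable w f")
  case True
  have "\<bar>density_expect w f\<bar> \<le> (LINT u:{0<..}|lborel. norm (f u * w u))"
    unfolding density_expect_def using True[unfolded density_integrable_def] set_integral_norm_bound by (metis real_norm_def)
  also have "\<dots> \<le> density_expect w g" unfolding density_expect_def
    using True assms set_integrable_abs[OF True[unfolded density_integrable_def]] unfolding density_integrable_def
    by (intro set_integral_mono) (auto simp: abs_mult w_nonneg intro!: mult_right_mono)
  finally show ?thesis .
next
  case False
  then have "density_expect w f = 0" unfolding density_expect_def density_integrable_def set_integrable_def set_lebesgue_integral_def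
    by (simp add: not_integrable_integral_eq)
  moreover have "0 \<le> density_expect w g" using assms(2) by (intro density_expect_nonneg) (metis abs_ge_zero order_trans)
  ultimately show ?thesis by simp
qed

lemma density_expect_add:
  assumes "density_integrable w f" "density_integrable w g"
  shows "density_integrable w (\<lambda>u. f u + g u)" "density_expect w (\<lambda>u. f u + g u) = density_expect w f + density_expect w g"
  using assms unfolding density_integrable_def density_expect_def by (simp_all add: distrib_right)

lemma density_expect_cmult:
  assumes "density_integrable w f"
  shows "density_integrable w (\<lambda>u. c * f u)" "density_expect w (\<lambda>u. c * f u) = c * density_expect w f"
  using assms unfolding density_integrable_def density_expect_def by (simp_all add: mult.assoc)

lemma density_integrable_iff: "density_integrable w f \<longleftrightarrow> integrable lborel (\<lambda>u. indicator {0<..} u * (f u * w u))"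
  unfolding density_integrable_def set_integrable_def by simp
lemma density_expect_eq: "density_expect w f = integral\<^sup>L lborel (\<lambda>u. indicator {0<..} u * (f u * w u))"
  unfolding density_expect_def set_lebesgue_integral_def by simp

lemma density_expect_le_suminf:
  fixes g :: "nat \<Rightarrow> real \<Rightarrow> real" and b :: "nat \<Rightarrow> real"
  assumes meas: "(\<lambda>u. indicator {0<..} u * f u) \<in> borel_measurable borel"
    and nn: "\<And>u. u > 0 \<Longrightarrow> 0 \<le> f u"
    and gI: "\<And>n. density_integrable w (g n)" and gnn: "\<And>n u. u > 0 \<Longrightarrow> 0 \<le> g n u"
    and gb: "\<And>n. density_expect w (g n) \<le> b n" and sb: "summable b"
    and pt: "\<And>u. u > 0 \<Longrightarrow> ennreal (f u) \<le> (\<Sum>n. ennreal (g n u))"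
  shows "density_integrable w f \<and> density_expect w f \<le> (\<Sum>n. b n)"
proof -
  define F where "F u = indicator {0<..} u * (f u * w u)" for u :: real
  define Gn where "Gn n u = indicator {0<..} u * (g n u * w u)" for n and u :: real
  have Fm: "F \<in> borel_measurable borel" unfolding F_def
    using meas by (simp add: mult.assoc[symmetric])
  have Fnn: "0 \<le> F u" for u unfolding F_def using nn w_nonneg by (auto simp: indicator_def)
  have Gnn: "0 \<le> Gn n u" for n u unfolding Gn_def using gnn w_nonneg by (auto simp: indicator_def)
  have GI: "integrable lborel (Gn n)" for n using gI[of n] unfolding density_integrable_iff Gn_def by simp
  have Gm: "Gn n \<in> borel_measurable borel" for n using borel_measurable_integrable[OF GI[of n]] by simp
  have b_nonneg: "0 \<le> b n" for n
    using gb[of n] density_expect_nonneg[of "g n"] gnn by force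
  have "(\<integral>\<^sup>+u. ennreal (F u) \<partial>lborel) \<le> (\<integral>\<^sup>+u. (\<Sum>n. ennreal (Gn n u)) \<partial>lborel)"
  proof (intro nn_integral_mono)
    fix u :: real
    show "ennreal (F u) \<le> (\<Sum>n. ennreal (Gn n u))"
    proof (cases "u > 0")
      case True
      have "ennreal (F u) = ennreal (f u) * ennreal (w u)"
        using True nn w_nonneg by (simp add: F_def ennreal_mult)
      also have "\<dots> \<le> (\<Sum>n. ennreal (g n u)) * ennreal (w u)"
        by (intro mult_right_mono pt True) simp
      also have "\<dots> = (\<Sum>n. ennreal (Gn n u))"
        using True gnn w_nonneg by (simp add: Gn_def ennreal_mult mult.commute)
      finally show ?thesis .
    next
      case False then show ?thesis by (simp add: F_def)
    qed
  qed
  also have "\<dots> = (\<Sum>n. \<integral>\<^sup>+u. ennreal (Gn n u) \<partial>lborel)"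
    by (rule nn_integral_suminf) (use Gm in simp)
  also have "\<dots> = (\<Sum>n. ennreal (density_expect w (g n)))"
  proof -
    have "\<And>n. (\<integral>\<^sup>+u. ennreal (Gn n u) \<partial>lborel) = ennreal (density_expect w (g n))"
      using nn_integral_eq_integral[OF GI] Gnn by (simp add: density_expect_eq Gn_def[abs_def])
    then show ?thesis by simp
  qed
  also have "\<dots> \<le> (\<Sum>n. ennreal (b n))"
    by (intro suminf_le) (auto simp: gb ennreal_leI)
  also have "\<dots> = ennreal (\<Sum>n. b n)" using suminf_ennreal2[OF b_nonneg sb] .
  finally have le: "(\<integral>\<^sup>+u. ennreal (F u) \<partial>lborel) \<le> ennreal (\<Sum>n. b n)" .
  have FI: "integrable lborel F"
    by (rule integrableI_nonneg) (use Fm Fnn le in \<open>auto simp: top.not_eq_extremum intro: le_less_trans\<close>)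
  have "ennreal (integral\<^sup>L lborel F) \<le> ennreal (\<Sum>n. b n)"
    using le nn_integral_eq_integral[OF FI] Fnn by simp
  then have "integral\<^sup>L lborel F \<le> (\<Sum>n. b n)"
    using suminf_nonneg[OF sb b_nonneg] by (simp add: ennreal_le_iff)
  then show ?thesis using FI unfolding density_integrable_iff density_expect_eq F_def by simp
qed

lemma density_integrable_one: "density_integrable w (\<lambda>_. 1)" and density_expect_one: "density_expect w (\<lambda>_. 1) = 1"
proof -
  show "density_integrable w (\<lambda>_. 1)" using w_set_integrable unfolding density_integrable_def by simp
  show "density_expect w (\<lambda>_. 1) = 1" using w_laplace[of 0] unfolding density_expect_def by simp
qed

lemma laplace_transform: assumes "r \<ge> 0"
  shows "density_integrable w (\<lambda>u. exp (- r * u))" "density_expect w (\<lambda>u. exp (- r * u)) = exp (- (r powr \<beta>))"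
proof -
  show "density_integrable w (\<lambda>u. exp (- r * u))"
    by (rule density_integrable_bound[OF density_integrable_one]) (use assms in \<open>auto simp: mult_nonneg_nonneg\<close>)
  show "density_expect w (\<lambda>u. exp (- r * u)) = exp (- (r powr \<beta>))"
    using w_laplace[OF assms] unfolding density_expect_def .
qed

section \<open>Moments of the stable law\<close>

definition "tail_const = 1 / (1 - exp (-1::real))"
lemma tail_const_pos: "tail_const > 0" unfolding tail_const_def by simp

text \<open>From \<open>indicator {a..} u \<le> tail_const * (1 - exp (- u / a))\<close> and the Laplace transform.\<close>

lemma tail_bound: assumes "a > 0"
  shows "density_integrable w (indicator {a..})" "density_expect w (indicator {a..}) \<le> tail_const * a powr (- \<beta>)"
proof -
  define g where "g u = tail_const * 1 + (- tail_const) * exp (- (1/a) * u)" for u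
  have gI: "density_integrable w g" unfolding g_def
    by (intro density_expect_add density_expect_cmult density_integrable_one laplace_transform) (use assms in simp)
  have parts: "density_integrable w (\<lambda>u. tail_const * 1)" "density_integrable w (\<lambda>u. (- tail_const) * exp (- (1/a) * u))"
    by (rule density_expect_cmult(1)[OF density_integrable_one], rule density_expect_cmult(1)[OF laplace_transform(1)]) (use assms in simp)
  have gE: "density_expect w g = tail_const * (1 - exp (- ((1/a) powr \<beta>)))"
  proof -
    have B: "density_expect w (\<lambda>u. tail_const*1) = tail_const" using density_expect_cmult(2)[OF density_integrable_one, of tail_const] density_expect_one by simp
    have C: "density_expect w (\<lambda>u. (-tail_const) * exp (- (1/a) * u)) = (-tail_const) * exp (- ((1/a) powr \<beta>))"
      using density_expect_cmult(2)[OF laplace_transform(1), of "1/a" "-tail_const"] laplace_transform(2)[of "1/a"] assms by simp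
    have "density_expect w g = tail_const + (-tail_const) * exp (- ((1/a) powr \<beta>))"
      unfolding g_def density_expect_add(2)[OF parts] B C by simp
    then show ?thesis by (simp add: algebra_simps)
  qed
  have pt: "\<bar>indicator {a..} u\<bar> \<le> g u" if "u > 0" for u :: real
  proof (cases "u \<ge> a")
    case True
    then have "exp (- (1/a) * u) \<le> exp (-1)" using assms by (simp add: field_simps)
    then show ?thesis using True unfolding g_def tail_const_def by (simp add: field_simps)
  next
    case False
    have "exp (- (1/a) * u) \<le> 1" using assms that by simp
    then show ?thesis using False tail_const_pos unfolding g_def by (simp add: algebra_simps)
  qed
  show "density_integrable w (indicator {a..})" by (rule density_integrable_bound[OF gI _ pt]) simp_all
  have "density_expect w (indicator {a..}) \<le> \<bar>density_expect w (indicator {a..})\<bar>" by simp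
  also have "\<dots> \<le> density_expect w g" by (rule density_expect_abs_le[OF gI pt])
  also have "\<dots> \<le> tail_const * (1/a) powr \<beta>" unfolding gE
    using exp_ge_add_one_self[of "- ((1/a) powr \<beta>)"] tail_const_pos by (intro mult_left_mono) auto
  also have "(1/a) powr \<beta> = a powr (- \<beta>)" using assms by (simp add: powr_minus_divide powr_divide)
  finally show "density_expect w (indicator {a..}) \<le> tail_const * a powr (- \<beta>)" .
qed

text \<open>All exponential moments of \<open>U powr (- \<beta>)\<close> are finite: on the dyadic block
  \<open>2^k \<le> 1/U < 2^(k+1)\<close> the integrand is dominated by a multiple of \<open>exp (- m 2^k U)\<close>, whose
  expectation \<open>exp (- (m 2^k) powr \<beta>)\<close> is computed by the Laplace transform; \<open>m\<close> is chosen so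
  that these terms decay like \<open>exp (- 2 powr (k \<beta>))\<close>.\<close>

lemma integrable_exp_neg_power:
  assumes c: "c \<ge> 0"
  shows "density_integrable w (\<lambda>u. exp (c * u powr (- \<beta>)))"
proof -
  define m where "m = (c * 2 powr \<beta> + 1) powr (1/\<beta>)"
  have cp: "c * 2 powr \<beta> + 1 > 0" using c by (simp add: add_nonneg_pos)
  have m0: "m > 0" unfolding m_def using cp by simp
  have mb: "m powr \<beta> = c * 2 powr \<beta> + 1" unfolding m_def using cp beta_pos
    by (simp add: powr_powr)
  define g where "g n u = (if n = 0 then exp c else
      exp m * exp (c * 2 powr (real n * \<beta>)) * exp (- (m * 2^(n-1)) * u))" for n u
  define b where "b n = (if n = 0 then exp c else exp m * exp (- (2 powr (real (n-1) * \<beta>))))" for n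
  have gI: "density_integrable w (g n)" for n
  proof (cases n)
    case 0 then show ?thesis unfolding g_def using density_expect_cmult(1)[OF density_integrable_one, of "exp c"] by simp
  next
    case (Suc k)
    have "density_integrable w (\<lambda>u. (exp m * exp (c * 2 powr (real n * \<beta>))) * exp (- (m * 2^k) * u))"
      by (rule density_expect_cmult(1)[OF laplace_transform(1)]) (use m0 in simp)
    then show ?thesis unfolding g_def using Suc by (simp add: mult.assoc)
  qed
  have gb: "density_expect w (g n) \<le> b n" for n
  proof (cases n)
    case 0 then show ?thesis unfolding g_def b_def using density_expect_cmult(2)[OF density_integrable_one, of "exp c"] density_expect_one by simp
  next
    case (Suc k)
    have "density_expect w (g n) = density_expect w (\<lambda>u. (exp m * exp (c * 2 powr (real n * \<beta>))) * exp (- (m * 2^k) * u))"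
      unfolding g_def using Suc by (simp add: mult.assoc)
    also have "\<dots> = exp m * exp (c * 2 powr (real n * \<beta>)) * exp (- ((m * 2^k) powr \<beta>))"
      using density_expect_cmult(2)[OF laplace_transform(1)] laplace_transform(2) m0 by simp
    also have "(m * 2^k) powr \<beta> = (c * 2 powr \<beta> + 1) * 2 powr (real k * \<beta>)"
      using m0 by (simp add: powr_mult mb powr_realpow[symmetric] powr_powr mult.commute)
    also have "c * 2 powr (real n * \<beta>) = c * 2 powr \<beta> * 2 powr (real k * \<beta>)"
      using Suc by (simp add: powr_add[symmetric] algebra_simps)
    also have "exp m * exp (c * 2 powr \<beta> * 2 powr (real k * \<beta>)) *
        exp (- ((c * 2 powr \<beta> + 1) * 2 powr (real k * \<beta>))) = b n"
      unfolding b_def using Suc by (simp add: exp_add[symmetric] algebra_simps)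
    finally show ?thesis by simp
  qed
  have "summable (\<lambda>k. b (Suc k))"
    unfolding b_def using summable_mult[OF summable_exp_neg_two_powr[OF beta_pos], of "exp m"] by simp
  then have sb: "summable b" by (simp add: summable_Suc_iff)
  have pt: "ennreal (exp (c * u powr (- \<beta>))) \<le> (\<Sum>n. ennreal (g n u))" if u: "u > 0" for u
  proof (cases "u \<ge> 1")
    case True
    have "u powr (- \<beta>) \<le> 1" using True beta_pos by (simp add: powr_minus_divide ge_one_powr_ge_zero)
    then have "exp (c * u powr (- \<beta>)) \<le> g 0 u" unfolding g_def using c
      by (simp add: mult_left_le)
    then show ?thesis by (rule ennreal_le_suminf_term)
  next
    case False
    then obtain k :: nat where k: "2^k * u \<le> 1" "u powr (- \<beta>) \<le> 2 powr (real (Suc k) * \<beta>)"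
      using dyadic_neg_powr_bound[of u \<beta>] u beta_pos by auto
    have "exp (c * u powr (- \<beta>)) \<le> exp (c * 2 powr (real (Suc k) * \<beta>))"
      using k(2) c by (simp add: mult_left_mono)
    moreover have "m * 2^k * u \<le> m" using k(1) m0 by (simp add: mult.assoc mult_left_le)
    then have "exp m * exp (- (m * 2^k) * u) \<ge> 1"
      by (simp add: exp_add[symmetric] mult.assoc)
    then have "exp (c * 2 powr (real (Suc k) * \<beta>)) \<le> g (Suc k) u" unfolding g_def
      by (simp add: mult.commute mult.left_commute mult_le_cancel_left1)
    ultimately show ?thesis by (intro ennreal_le_suminf_term) (rule order_trans)
  qed
  show ?thesis
    using density_expect_le_suminf[of "\<lambda>u. exp (c * u powr (- \<beta>))" g b, OF _ _ gI _ gb sb pt]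
    by (auto simp: g_def)
qed

lemma integrable_exp_neg_power_times: assumes c: "c \<ge> 0"
  shows "density_integrable w (\<lambda>u. exp (c * u powr (- \<beta>)) * u powr (- \<beta>))"
proof (rule density_integrable_bound[OF integrable_exp_neg_power[of "c+1"]])
  show "0 \<le> c + 1" using c by simp
  show "(\<lambda>u. indicator {0<..} u * (exp (c * u powr - \<beta>) * u powr - \<beta>)) \<in> borel_measurable borel"
    by measurable
  fix u :: real assume "u > 0"
  have "u powr (- \<beta>) \<le> exp (u powr (- \<beta>))" using exp_ge_add_one_self[of "u powr (- \<beta>)"] by linarith
  then have "exp (c * u powr - \<beta>) * u powr - \<beta> \<le> exp (c * u powr - \<beta>) * exp (u powr (- \<beta>))"
    by (intro mult_left_mono) auto
  also have "\<dots> = exp ((c + 1) * u powr - \<beta>)" by (simp add: exp_add[symmetric] algebra_simps)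
  finally show "\<bar>exp (c * u powr - \<beta>) * u powr - \<beta>\<bar> \<le> exp ((c + 1) * u powr - \<beta>)" by simp
qed

lemma integrable_neg_power: "density_integrable w (\<lambda>u. u powr (- \<beta>))"
  using integrable_exp_neg_power_times[of 0] by simp

lemma neg_power_tail_bound: assumes a: "a > 0"
  shows "density_integrable w (\<lambda>u. u powr (- \<beta>) * indicator {a..} u)"
    "density_expect w (\<lambda>u. u powr (- \<beta>) * indicator {a..} u) \<le> tail_const * a powr (- 2 * \<beta>)"
proof -
  have I: "density_integrable w (\<lambda>u. a powr (- \<beta>) * indicator {a..} u)" by (rule density_expect_cmult(1)[OF tail_bound(1)[OF a]])
  have pt: "\<bar>u powr (- \<beta>) * indicator {a..} u\<bar> \<le> a powr (- \<beta>) * indicator {a..} u" if "u > 0" for u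
  proof (cases "u \<ge> a")
    case True then show ?thesis using a beta_pos by (simp add: powr_mono2')
  qed simp
  show "density_integrable w (\<lambda>u. u powr (- \<beta>) * indicator {a..} u)"
    by (rule density_integrable_bound[OF I _ pt]) measurable
  have "density_expect w (\<lambda>u. u powr (- \<beta>) * indicator {a..} u) \<le> density_expect w (\<lambda>u. a powr (- \<beta>) * indicator {a..} u)"
    using density_expect_abs_le[OF I pt] by simp
  also have "\<dots> = a powr (- \<beta>) * density_expect w (indicator {a..})"
    using density_expect_cmult(2)[OF tail_bound(1)[OF a]] by simp
  also have "\<dots> \<le> a powr (- \<beta>) * (tail_const * a powr (- \<beta>))"
    by (intro mult_left_mono tail_bound(2)[OF a]) simp
  also have "\<dots> = tail_const * a powr (- 2 * \<beta>)" by (simp add: powr_add[symmetric])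
  finally show "density_expect w (\<lambda>u. u powr (- \<beta>) * indicator {a..} u) \<le> tail_const * a powr (- 2 * \<beta>)" .
qed

lemma dyadic_moment_bound:
  fixes P :: "nat \<Rightarrow> bool"
  assumes q: "q > 0"
    and meas: "(\<lambda>u. indicator {0<..} u * f u) \<in> borel_measurable borel"
    and fb: "\<And>u. u > 0 \<Longrightarrow> 0 \<le> f u \<and> f u \<le> u powr q"
    and Q: "\<And>u j. u \<ge> 1 \<Longrightarrow> f u \<noteq> 0 \<Longrightarrow> 2^j \<le> u \<Longrightarrow> P j"
    and sm: "summable (\<lambda>j. if P j then 2 powr (real (Suc j) * q) * 2 powr (- real j * \<beta>) else 0)"
  shows "density_integrable w f \<and>
    density_expect w f \<le> 1 + tail_const * (\<Sum>j. if P j then 2 powr (real (Suc j) * q) * 2 powr (- real j * \<beta>) else 0)"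
proof -
  define a where "a j = (if P j then 2 powr (real (Suc j) * q) * 2 powr (- real j * \<beta>) else 0)" for j
  define b where "b n = (case n of 0 \<Rightarrow> 1 | Suc j \<Rightarrow> tail_const * a j)" for n
  have gI: "density_integrable w (dyadic_majorant P q n)" for n
  proof (cases n)
    case 0 then show ?thesis using density_integrable_one by (simp add: dyadic_majorant_def[abs_def])
  next
    case (Suc j) then show ?thesis
      using density_expect_cmult(1)[OF tail_bound(1), of "2^j" "if P j then 2 powr (real (Suc j) * q) else 0"]
      by (simp add: dyadic_majorant_def[abs_def])
  qed
  have gb: "density_expect w (dyadic_majorant P q n) \<le> b n" for n
  proof (cases n)
    case 0 then show ?thesis using density_expect_one by (simp add: dyadic_majorant_def[abs_def] b_def)
  next
    case (Suc j)
    let ?c = "if P j then 2 powr (real (Suc j) * q) else 0"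
    have "density_expect w (dyadic_majorant P q n) = ?c * density_expect w (indicator {2^j..})"
      using Suc density_expect_cmult(2)[OF tail_bound(1), of "2^j" ?c]
      by (simp add: dyadic_majorant_def[abs_def])
    also have "\<dots> \<le> ?c * (tail_const * (2^j) powr (- \<beta>))"
      by (intro mult_left_mono tail_bound(2)) simp_all
    also have "\<dots> = b n"
      using Suc by (simp add: b_def a_def powr_realpow[symmetric] powr_powr mult_ac)
    finally show ?thesis .
  qed
  have sa: "summable a" using sm unfolding a_def .
  then have "summable (\<lambda>n. b (Suc n))" using summable_mult[OF sa, of tail_const] by (simp add: b_def)
  then have sb: "summable b" by (simp add: summable_Suc_iff)
  have "(\<Sum>n. b n) = b 0 + (\<Sum>n. b (Suc n))" using suminf_split_head[OF sb] by simp
  also have "\<dots> = 1 + tail_const * (\<Sum>j. a j)" using suminf_mult[OF sa, of tail_const] by (simp add: b_def)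
  finally have sum_b: "(\<Sum>n. b n) = 1 + tail_const * (\<Sum>j. a j)" .
  have "density_integrable w f \<and> density_expect w f \<le> (\<Sum>n. b n)"
    by (rule density_expect_le_suminf[OF meas _ gI _ gb sb le_suminf_dyadic_majorant[OF q]])
      (use fb Q in \<open>auto simp: dyadic_majorant_def split: nat.split\<close>)
  then show ?thesis unfolding sum_b a_def .
qed

lemma low_moment_bound: assumes q: "0 < q" "q < \<beta>"
  shows "density_integrable w (\<lambda>u. u powr q)" "density_expect w (\<lambda>u. u powr q) \<le> 1 + tail_const * (2 powr q / (1 - 2 powr (q - \<beta>)))"
proof -
  define r where "r = 2 powr (q - \<beta>)"
  have r: "0 < r" "r < 1" unfolding r_def using q powr_less_mono[of "q-\<beta>" 0 2] by auto
  have eq: "(\<lambda>j. if True then 2 powr (real (Suc j) * q) * 2 powr (- real j * \<beta>) else 0) =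
      (\<lambda>j. 2 powr q * r ^ j)" unfolding r_def by (intro ext) (simp only: dyadic_term_eq if_True)
  have sm: "summable (\<lambda>j. 2 powr q * r ^ j)" using r by (intro summable_mult summable_geometric) simp
  have "density_integrable w (\<lambda>u. u powr q) \<and> density_expect w (\<lambda>u. u powr q) \<le> 1 + tail_const * (\<Sum>j. 2 powr q * r ^ j)"
    using dyadic_moment_bound[of q "\<lambda>u. u powr q" "\<lambda>_. True"] q sm unfolding eq by (simp add: measurable_ident)
  moreover have "(\<Sum>j. 2 powr q * r ^ j) = 2 powr q / (1 - r)"
    using suminf_mult[OF summable_geometric[of r], of "2 powr q"] suminf_geometric[of r] r by simp
  ultimately show "density_integrable w (\<lambda>u. u powr q)" "density_expect w (\<lambda>u. u powr q) \<le> 1 + tail_const * (2 powr q / (1 - 2 powr (q - \<beta>)))"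
    unfolding r_def by auto
qed

lemma dyadic_truncated_moment_bound: assumes q: "0 < q"
  shows "density_integrable w (\<lambda>u. u powr q * indicator {..<2^J} u)"
    "density_expect w (\<lambda>u. u powr q * indicator {..<2^J} u) \<le> 1 + tail_const * (2 powr q * (\<Sum>j<J. (2 powr (q - \<beta>)) ^ j))"
proof -
  define r where "r = 2 powr (q - \<beta>)"
  have eq: "(\<lambda>j. if j < J then 2 powr (real (Suc j) * q) * 2 powr (- real j * \<beta>) else 0) =
      (\<lambda>j. if j < J then 2 powr q * r ^ j else 0)" unfolding r_def by (intro ext) (simp only: dyadic_term_eq)
  have sm: "summable (\<lambda>j. if j < J then 2 powr q * r ^ j else 0)"
    by (rule summable_finite[of "{..<J}"]) auto
  have su: "(\<Sum>j. if j < J then 2 powr q * r ^ j else (0::real)) = 2 powr q * (\<Sum>j<J. r ^ j)"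
    by (subst suminf_finite[of "{..<J}"]) (auto simp: sum_distrib_left)
  have Q: "j < J" if "2^j \<le> u" "u powr q * indicator {..<2^J} u \<noteq> 0" for u :: real and j
  proof -
    have "u < 2^J" using that(2) by (auto simp: indicator_def split: if_splits)
    then have "(2::real)^j < 2^J" using that(1) by linarith
    then show ?thesis by simp
  qed
  have fb: "0 \<le> u powr q * indicator {..<2^J} u \<and> u powr q * indicator {..<2^J} u \<le> u powr q" for u :: real
    by (auto simp: indicator_def)
  have "density_integrable w (\<lambda>u. u powr q * indicator {..<2^J} u) \<and>
      density_expect w (\<lambda>u. u powr q * indicator {..<2^J} u) \<le> 1 + tail_const * (2 powr q * (\<Sum>j<J. r ^ j))"
    using dyadic_moment_bound[of q "\<lambda>u. u powr q * indicator {..<2^J} u" "\<lambda>j. j < J", OF q _ fb Q] sm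
    unfolding eq su by (simp add: measurable_ident)
  then show "density_integrable w (\<lambda>u. u powr q * indicator {..<2^J} u)"
    "density_expect w (\<lambda>u. u powr q * indicator {..<2^J} u) \<le> 1 + tail_const * (2 powr q * (\<Sum>j<J. (2 powr (q - \<beta>)) ^ j))"
    unfolding r_def by auto
qed

lemma truncated_moment_mono:
  assumes a: "a \<le> b" and bI: "density_integrable w (\<lambda>u. u powr q * indicator {..<b} u)"
  shows "density_integrable w (\<lambda>u. u powr q * indicator {..<a} u)"
    "density_expect w (\<lambda>u. u powr q * indicator {..<a} u) \<le> density_expect w (\<lambda>u. u powr q * indicator {..<b} u)"
proof -
  have pt: "\<bar>u powr q * indicator {..<a} u\<bar> \<le> u powr q * indicator {..<b} u" for u :: real
    using a by (auto simp: indicator_def)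
  show I: "density_integrable w (\<lambda>u. u powr q * indicator {..<a} u)"
    by (rule density_integrable_bound[OF bI _ pt]) measurable
  show "density_expect w (\<lambda>u. u powr q * indicator {..<a} u) \<le> density_expect w (\<lambda>u. u powr q * indicator {..<b} u)"
    using density_expect_abs_le[OF bI pt] by simp
qed

definition "trunc_const_gt q = 1 + tail_const * (2 powr q * (2 powr (q - \<beta>) / (2 powr (q - \<beta>) - 1)))"
definition "trunc_const_eq = 1 + tail_const * 2 powr \<beta> + tail_const * 2 powr \<beta> / ln 2"

lemma truncated_moment_bound_gt: assumes q: "\<beta> < q" and a: "1 \<le> a"
  shows "density_integrable w (\<lambda>u. u powr q * indicator {..<a} u)"
    "density_expect w (\<lambda>u. u powr q * indicator {..<a} u) \<le> trunc_const_gt q * a powr (q - \<beta>)"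
proof -
  obtain J :: nat where J: "a \<le> 2^J" "2^J \<le> 2 * a" using dyadic_cover[OF a] by blast
  have q0: "0 < q" using q beta_pos by simp
  define r where "r = 2 powr (q - \<beta>)"
  have r1: "1 < r" unfolding r_def using q by simp
  show "density_integrable w (\<lambda>u. u powr q * indicator {..<a} u)"
    by (rule truncated_moment_mono(1)[OF J(1) dyadic_truncated_moment_bound(1)[OF q0]])
  have "density_expect w (\<lambda>u. u powr q * indicator {..<a} u) \<le> density_expect w (\<lambda>u. u powr q * indicator {..<2^J} u)"
    by (rule truncated_moment_mono(2)[OF J(1) dyadic_truncated_moment_bound(1)[OF q0]])
  also have "\<dots> \<le> 1 + tail_const * (2 powr q * (\<Sum>j<J. r ^ j))" unfolding r_def by (rule dyadic_truncated_moment_bound(2)[OF q0])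
  also have "(\<Sum>j<J. r ^ j) = (r ^ J - 1) / (r - 1)" using r1 by (simp add: geometric_sum)
  also have "\<dots> \<le> r ^ J / (r - 1)" using r1 by (simp add: divide_right_mono)
  also have "r ^ J = (2 ^ J) powr (q - \<beta>)" unfolding r_def
    by (simp add: powr_realpow[symmetric] powr_powr mult.commute)
  also have "\<dots> \<le> (2 * a) powr (q - \<beta>)" using J q by (intro powr_mono2) auto
  also have "\<dots> = r * a powr (q - \<beta>)" unfolding r_def using a by (simp add: powr_mult)
  finally have le: "density_expect w (\<lambda>u. u powr q * indicator {..<a} u) \<le> 1 + tail_const * (2 powr q * (r * a powr (q - \<beta>) / (r - 1)))"
    using tail_const_pos r1 by (simp add: mult_left_mono divide_right_mono)
  have ap: "1 \<le> a powr (q - \<beta>)" using a q by (simp add: ge_one_powr_ge_zero)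
  have "1 + tail_const * (2 powr q * (r * a powr (q - \<beta>) / (r - 1))) \<le> a powr (q - \<beta>) + tail_const * (2 powr q * (r / (r - 1))) * a powr (q - \<beta>)"
    using ap by simp
  also have "\<dots> = trunc_const_gt q * a powr (q - \<beta>)" unfolding trunc_const_gt_def r_def by (simp add: algebra_simps)
  finally show "density_expect w (\<lambda>u. u powr q * indicator {..<a} u) \<le> trunc_const_gt q * a powr (q - \<beta>)" using le by linarith
qed

lemma truncated_moment_bound_eq: assumes a: "1 \<le> a"
  shows "density_integrable w (\<lambda>u. u powr \<beta> * indicator {..<a} u)"
    "density_expect w (\<lambda>u. u powr \<beta> * indicator {..<a} u) \<le> trunc_const_eq * (1 + ln a)"
proof -
  obtain J :: nat where J: "a \<le> 2^J" "real J \<le> 1 + ln a / ln 2" using dyadic_cover[OF a] by blast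
  show "density_integrable w (\<lambda>u. u powr \<beta> * indicator {..<a} u)"
    by (rule truncated_moment_mono(1)[OF J(1) dyadic_truncated_moment_bound(1)[OF beta_pos]])
  have "density_expect w (\<lambda>u. u powr \<beta> * indicator {..<a} u) \<le> density_expect w (\<lambda>u. u powr \<beta> * indicator {..<2^J} u)"
    by (rule truncated_moment_mono(2)[OF J(1) dyadic_truncated_moment_bound(1)[OF beta_pos]])
  also have "\<dots> \<le> 1 + tail_const * (2 powr \<beta> * real J)" using dyadic_truncated_moment_bound(2)[OF beta_pos, of J] by simp
  also have "\<dots> \<le> 1 + tail_const * (2 powr \<beta> * (1 + ln a / ln 2))"
    using J(2) tail_const_pos by (intro add_left_mono mult_left_mono) auto
  also have "\<dots> \<le> trunc_const_eq * (1 + ln a)"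
  proof -
    have l: "0 \<le> ln a" using a by simp
    have "1 + tail_const * (2 powr \<beta> * (1 + ln a / ln 2)) = (1 + tail_const * 2 powr \<beta>) + (tail_const * 2 powr \<beta> / ln 2) * ln a"
      by (simp add: algebra_simps)
    also have "\<dots> \<le> trunc_const_eq * 1 + trunc_const_eq * ln a" unfolding trunc_const_eq_def using l tail_const_pos
      by (intro add_mono mult_right_mono) auto
    finally show ?thesis by (simp add: algebra_simps)
  qed
  finally show "density_expect w (\<lambda>u. u powr \<beta> * indicator {..<a} u) \<le> trunc_const_eq * (1 + ln a)" .
qed

definition "exp_moment A = density_expect w (\<lambda>u. exp (A * u powr (- \<beta>)))"
definition "neg_moment = density_expect w (\<lambda>u. u powr (- \<beta>))"
definition "exp_neg_moment A = density_expect w (\<lambda>u. exp (A * u powr (- \<beta>)) * u powr (- \<beta>))"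

lemma trunc_const_eq_nonneg: "trunc_const_eq \<ge> 0" unfolding trunc_const_eq_def using tail_const_pos by (simp add: add_nonneg_nonneg)
lemma exp_moment_nonneg: "exp_moment A \<ge> 0" unfolding exp_moment_def by (rule density_expect_nonneg) simp

lemma density_expect_le_neg_moments:
  assumes A: "A1 \<ge> 0" "A2 \<ge> 0" and M: "M \<ge> 0"
    and H: "\<And>u. u > 0 \<Longrightarrow> \<bar>H u\<bar> \<le> M * (A1 * u powr (- \<beta>) + exp (A2 * u powr (- \<beta>)) * u powr (- \<beta>))"
  shows "\<bar>density_expect w H\<bar> \<le> M * (A1 * neg_moment + exp_neg_moment A2)"
proof -
  have I1: "density_integrable w (\<lambda>u. A1 * u powr (- \<beta>))" by (rule density_expect_cmult(1)[OF integrable_neg_power])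
  have I2: "density_integrable w (\<lambda>u. exp (A2 * u powr (- \<beta>)) * u powr (- \<beta>))" by (rule integrable_exp_neg_power_times[OF A(2)])
  have I: "density_integrable w (\<lambda>u. M * (A1 * u powr (- \<beta>) + exp (A2 * u powr (- \<beta>)) * u powr (- \<beta>)))"
    by (rule density_expect_cmult(1)[OF density_expect_add(1)[OF I1 I2]])
  have "\<bar>density_expect w H\<bar> \<le> density_expect w (\<lambda>u. M * (A1 * u powr (- \<beta>) + exp (A2 * u powr (- \<beta>)) * u powr (- \<beta>)))"
    by (rule density_expect_abs_le[OF I H])
  also have "\<dots> = M * (A1 * neg_moment + exp_neg_moment A2)"
    unfolding density_expect_cmult(2)[OF density_expect_add(1)[OF I1 I2]] density_expect_add(2)[OF I1 I2] density_expect_cmult(2)[OF integrable_neg_power] neg_moment_def exp_neg_moment_def ..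
  finally show ?thesis .
qed

definition "low_moment_const q = 1 + tail_const * (2 powr q / (1 - 2 powr (q - \<beta>)))"

lemma density_expect_le_low_moment:
  assumes A: "A1 \<ge> 0" "A2 \<ge> 0" and q: "0 < q" "q < \<beta>" and T: "T \<ge> 1"
    and H: "\<And>u. u > 0 \<Longrightarrow> \<bar>H u\<bar> \<le> A1 * T * u powr q + exp (A2 * u powr (- \<beta>))"
  shows "\<bar>density_expect w H\<bar> \<le> T * (A1 * low_moment_const q + exp_moment A2)"
proof -
  have I1: "density_integrable w (\<lambda>u. (A1 * T) * u powr q)" by (rule density_expect_cmult(1)[OF low_moment_bound(1)[OF q]])
  have I2: "density_integrable w (\<lambda>u. exp (A2 * u powr (- \<beta>)))" by (rule integrable_exp_neg_power[OF A(2)])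
  have "\<bar>density_expect w H\<bar> \<le> density_expect w (\<lambda>u. (A1 * T) * u powr q + exp (A2 * u powr (- \<beta>)))"
    by (rule density_expect_abs_le[OF density_expect_add(1)[OF I1 I2]]) (use H in simp)
  also have "\<dots> = A1 * T * density_expect w (\<lambda>u. u powr q) + exp_moment A2"
    unfolding density_expect_add(2)[OF I1 I2] density_expect_cmult(2)[OF low_moment_bound(1)[OF q]] exp_moment_def ..
  also have "\<dots> \<le> A1 * T * low_moment_const q + T * exp_moment A2"
  proof (intro add_mono)
    show "A1 * T * density_expect w (\<lambda>u. u powr q) \<le> A1 * T * low_moment_const q"
      using low_moment_bound(2)[OF q] A T unfolding low_moment_const_def by (intro mult_left_mono) auto
    show "exp_moment A2 \<le> T * exp_moment A2"
      using T exp_moment_nonneg[of A2] by (simp add: mult_le_cancel_right1)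
  qed
  finally show ?thesis by (simp add: algebra_simps)
qed

lemma density_expect_le_split_moment:
  assumes A: "A2 \<ge> 0" and M: "M1 \<ge> 0" "M2 \<ge> 0" and q: "0 < q" and a: "a \<ge> 1"
    and H: "\<And>u. u > 0 \<Longrightarrow> \<bar>H u\<bar> \<le> M1 * (u powr (- \<beta>) * indicator {a..} u)
       + M2 * (u powr q * indicator {..<a} u) + exp (A2 * u powr (- \<beta>))"
    and IT: "density_integrable w (\<lambda>u. u powr q * indicator {..<a} u)"
  shows "\<bar>density_expect w H\<bar> \<le> M1 * (tail_const * a powr (- 2 * \<beta>)) + M2 * density_expect w (\<lambda>u. u powr q * indicator {..<a} u) + exp_moment A2"
proof -
  have a0: "a > 0" using a by simp
  have I1: "density_integrable w (\<lambda>u. M1 * (u powr (- \<beta>) * indicator {a..} u))" by (rule density_expect_cmult(1)[OF neg_power_tail_bound(1)[OF a0]])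
  have I2: "density_integrable w (\<lambda>u. M2 * (u powr q * indicator {..<a} u))" by (rule density_expect_cmult(1)[OF IT])
  have I3: "density_integrable w (\<lambda>u. exp (A2 * u powr (- \<beta>)))" by (rule integrable_exp_neg_power[OF A])
  have I12: "density_integrable w (\<lambda>u. M1 * (u powr (- \<beta>) * indicator {a..} u) + M2 * (u powr q * indicator {..<a} u))"
    by (rule density_expect_add(1)[OF I1 I2])
  have "\<bar>density_expect w H\<bar> \<le> density_expect w (\<lambda>u. (M1 * (u powr (- \<beta>) * indicator {a..} u) + M2 * (u powr q * indicator {..<a} u)) + exp (A2 * u powr (- \<beta>)))"
    by (rule density_expect_abs_le[OF density_expect_add(1)[OF I12 I3]]) (use H in simp)
  also have "\<dots> = M1 * density_expect w (\<lambda>u. u powr (- \<beta>) * indicator {a..} u) + M2 * density_expect w (\<lambda>u. u powr q * indicator {..<a} u) + exp_moment A2"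
    unfolding density_expect_add(2)[OF I12 I3] density_expect_add(2)[OF I1 I2] density_expect_cmult(2)[OF neg_power_tail_bound(1)[OF a0]] density_expect_cmult(2)[OF IT] exp_moment_def ..
  also have "\<dots> \<le> M1 * (tail_const * a powr (- 2 * \<beta>)) + M2 * density_expect w (\<lambda>u. u powr q * indicator {..<a} u) + exp_moment A2"
    using neg_power_tail_bound(2)[OF a0] M by (intro add_mono mult_left_mono) auto
  finally show ?thesis .
qed

section \<open>Subordination\<close>

lemma integral_substitution_neg_power:
  fixes F :: "real \<Rightarrow> real"
  assumes Fm: "(\<lambda>z. indicator {0<..} z * F z) \<in> borel_measurable borel"
  shows "(LINT z:{0<..}|lborel. F z * z powr (-1 - 1/\<beta>) * w (z powr (-1/\<beta>)))
    = \<beta> * density_expect w (\<lambda>u. F (u powr (- \<beta>)))"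
proof -
  have "(\<lambda>z. (indicator {0<..} z * F z) * (z powr (-1 - 1/\<beta>) * w (z powr (-1/\<beta>)))) \<in> borel_measurable borel"
    using Fm by measurable
  then have "(LINT z:{0<..}|lborel. F z * z powr (-1 - 1/\<beta>) * w (z powr (-1/\<beta>)))
      = (LINT u:{0<..}|lborel. \<beta> * u powr (- \<beta> - 1)
           * (F (u powr (- \<beta>)) * (u powr (- \<beta>)) powr (-1 - 1/\<beta>) * w ((u powr (- \<beta>)) powr (-1/\<beta>))))"
    by (intro set_integral_neg_powr_substitution[OF beta_pos]) (simp add: mult_ac)
  also have "\<dots> = (LINT u:{0<..}|lborel. \<beta> * (F (u powr (- \<beta>)) * w u))"
  proof (intro set_lebesgue_integral_cong allI impI)
    fix u :: real assume "u \<in> {0<..}"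
    then have "u powr (- \<beta> - 1) * (u powr (- \<beta>)) powr (-1 - 1/\<beta>) = 1" "(u powr (- \<beta>)) powr (-1/\<beta>) = u"
      using beta_pos by (simp_all add: powr_powr powr_add[symmetric] field_simps)
    then show "\<beta> * u powr (- \<beta> - 1) * (F (u powr (- \<beta>)) * (u powr (- \<beta>)) powr (-1 - 1/\<beta>)
        * w ((u powr (- \<beta>)) powr (-1/\<beta>))) = \<beta> * (F (u powr (- \<beta>)) * w u)"
      by (metis (no_types, lifting) mult.assoc mult.left_commute mult.right_neutral)
  qed simp
  finally show ?thesis unfolding density_expect_def by simp
qed

lemma Gbeta_eq_density_expect:
  fixes G :: "real \<Rightarrow> 'a::topological_space \<Rightarrow> 'b::topological_space \<Rightarrow> real"
  assumes G_cont: "continuous_on ({0<..} \<times> UNIV \<times> UNIV) (\<lambda>(s, x, y). G s x y)" and t: "t > 0"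
  shows "(1 / \<beta>) * (LINT z:{0<..}|lborel. G (t powr \<beta> * z) x y * z powr (-1 - 1/\<beta>) * w (z powr (-1/\<beta>)))
     = density_expect w (\<lambda>u. G (t powr \<beta> * u powr (- \<beta>)) x y)"
proof -
  have c: "continuous_on {0<..} (\<lambda>z. G (t powr \<beta> * z) x y)"
  proof -
    have "continuous_on {0<..} (\<lambda>z. (t powr \<beta> * z, x, y))" by (intro continuous_intros)
    moreover have "(\<lambda>z. (t powr \<beta> * z, x, y)) ` {0<..} \<subseteq> {0<..} \<times> UNIV" using t by auto
    ultimately show ?thesis using continuous_on_compose2[OF G_cont, of "{0<..}" "\<lambda>z. (t powr \<beta> * z, x, y)"]
      by simp
  qed
  have m: "(\<lambda>z. indicator {0<..} z * G (t powr \<beta> * z) x y) \<in> borel_measurable borel"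
    using borel_measurable_continuous_on_indicator[OF _ c] by simp
  show ?thesis using integral_substitution_neg_power[OF m] beta_pos by (simp add: mult.assoc)
qed

lemma density_integrable_abs: assumes "density_integrable w f" shows "density_integrable w (\<lambda>u. \<bar>f u\<bar>)"
proof -
  have "integrable lborel (\<lambda>u. \<bar>indicator {0<..} u * (f u * w u)\<bar>)"
    using assms unfolding density_integrable_iff by (rule integrable_abs)
  also have "(\<lambda>u. \<bar>indicator {0<..} u * (f u * w u)\<bar>) = (\<lambda>u. indicator {0<..} u * (\<bar>f u\<bar> * w u))"
    using w_nonneg by (auto simp: indicator_def abs_mult)
  finally show ?thesis unfolding density_integrable_iff .
qed

lemma density_expect_diff:
  assumes "density_integrable w f" "density_integrable w g"
  shows "density_integrable w (\<lambda>u. f u - g u)"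
    "density_expect w (\<lambda>u. f u - g u) = density_expect w f - density_expect w g"
  using assms unfolding density_integrable_def density_expect_def by (simp_all add: left_diff_distrib)

lemma density_expect_dominated_convergence:
  assumes F_meas: "\<And>n. (\<lambda>u. indicator {0<..} u * F n u) \<in> borel_measurable borel"
    and lim_meas: "(\<lambda>u. indicator {0<..} u * f u) \<in> borel_measurable borel"
    and lim: "\<And>u. u > 0 \<Longrightarrow> (\<lambda>n. F n u) \<longlonglongrightarrow> f u"
    and B: "density_integrable w B" and bound: "\<And>n u. u > 0 \<Longrightarrow> \<bar>F n u\<bar> \<le> B u"
  shows "(\<lambda>n. density_expect w (F n)) \<longlonglongrightarrow> density_expect w f"
  unfolding density_expect_eq
proof (rule integral_dominated_convergence[where w="\<lambda>u. indicator {0<..} u * (B u * w u)"])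
  show "(\<lambda>u. indicator {0<..} u * (f u * w u)) \<in> borel_measurable lborel"
    using lim_meas by (simp add: mult.assoc[symmetric])
  show "(\<lambda>u. indicator {0<..} u * (F n u * w u)) \<in> borel_measurable lborel" for n
    using F_meas[of n] by (simp add: mult.assoc[symmetric])
  show "integrable lborel (\<lambda>u. indicator {0<..} u * (B u * w u))"
    using B unfolding density_integrable_iff .
  show "AE u in lborel. (\<lambda>n. indicator {0<..} u * (F n u * w u)) \<longlonglongrightarrow> indicator {0<..} u * (f u * w u)"
    using lim by (intro AE_I2) (auto simp: indicator_def intro!: tendsto_mult)
  show "AE u in lborel. norm (indicator {0<..} u * (F n u * w u)) \<le> indicator {0<..} u * (B u * w u)" for n
    using bound w_nonneg by (intro AE_I2) (auto simp: indicator_def abs_mult intro!: mult_right_mono)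
qed

lemma has_real_derivative_density_expect:
  fixes f f' :: "real \<Rightarrow> real \<Rightarrow> real"
  assumes d: "\<delta> > 0"
    and der: "\<And>u h. u > 0 \<Longrightarrow> \<bar>h\<bar> < \<delta> \<Longrightarrow> ((\<lambda>h. f u h) has_real_derivative f' u h) (at h)"
    and bnd: "\<And>u h. u > 0 \<Longrightarrow> \<bar>h\<bar> < \<delta> \<Longrightarrow> \<bar>f' u h\<bar> \<le> B u"
    and BI: "density_integrable w B"
    and fm: "\<And>h. \<bar>h\<bar> < \<delta> \<Longrightarrow> (\<lambda>u. indicator {0<..} u * f u h) \<in> borel_measurable borel"
    and f0I: "density_integrable w (\<lambda>u. f u 0)"
    and f'm: "(\<lambda>u. indicator {0<..} u * f' u 0) \<in> borel_measurable borel"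
  shows "((\<lambda>h. density_expect w (\<lambda>u. f u h)) has_real_derivative density_expect w (\<lambda>u. f' u 0)) (at 0)"
proof -
  have mv: "\<bar>f u h - f u 0\<bar> \<le> B u * \<bar>h\<bar>" if "u > 0" "\<bar>h\<bar> < \<delta>" for u h
    using mvt_abs_bound[of \<delta> "f u" "f' u" "B u" h] der bnd that by auto
  have fI: "density_integrable w (\<lambda>u. f u h)" if h: "\<bar>h\<bar> < \<delta>" for h
  proof (rule density_integrable_bound)
    show "density_integrable w (\<lambda>u. \<bar>f u 0\<bar> + \<bar>h\<bar> * B u)"
      by (intro density_expect_add density_expect_cmult density_integrable_abs f0I BI)
    show "(\<lambda>u. indicator {0<..} u * f u h) \<in> borel_measurable borel" using fm h .
    show "\<bar>f u h\<bar> \<le> \<bar>f u 0\<bar> + \<bar>h\<bar> * B u" if "u > 0" for u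
      using mv[OF that h] by (simp add: mult.commute)
  qed
  define q where "q h u = (f u h - f u 0) / h" for h u
  have qE: "density_expect w (q h) = (density_expect w (\<lambda>u. f u h) - density_expect w (\<lambda>u. f u 0)) / h"
    if "\<bar>h\<bar> < \<delta>" for h
    using density_expect_cmult(2)[OF density_expect_diff(1)[OF fI[OF that] f0I], of "1 / h"]
      density_expect_diff(2)[OF fI[OF that] f0I]
    unfolding q_def[abs_def] by simp
  have "(\<lambda>n. density_expect w (q (X n))) \<longlonglongrightarrow> density_expect w (\<lambda>u. f' u 0)"
    if X: "\<forall>n. X n \<noteq> 0" "X \<longlonglongrightarrow> 0" for X
  proof -
    obtain N where N: "\<And>n. n \<ge> N \<Longrightarrow> \<bar>X n\<bar> < \<delta>"
      using X(2) d unfolding LIMSEQ_iff by auto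
    have "(\<lambda>n. density_expect w (q (X (n + N)))) \<longlonglongrightarrow> density_expect w (\<lambda>u. f' u 0)"
    proof (rule density_expect_dominated_convergence[OF _ f'm _ BI])
      show "(\<lambda>u. indicator {0<..} u * q (X (n + N)) u) \<in> borel_measurable borel" for n
        using fm[OF N[of "n + N"]] fm[of 0] d unfolding q_def
        by (simp add: diff_divide_distrib right_diff_distrib)
      show "(\<lambda>n. q (X (n + N)) u) \<longlonglongrightarrow> f' u 0" if "u > 0" for u
        using der[OF that, of 0] d LIMSEQ_ignore_initial_segment[OF X(2), of N] X(1)
        unfolding has_field_derivative_iff tendsto_at_iff_sequentially comp_def q_def by auto
      show "\<bar>q (X (n + N)) u\<bar> \<le> B u" if "u > 0" for n u
        using mv[OF that N[of "n + N"]] X(1) by (simp add: q_def abs_divide divide_le_eq)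
    qed
    then show ?thesis by (rule LIMSEQ_offset)
  qed
  then have "((\<lambda>h. density_expect w (q h)) \<longlongrightarrow> density_expect w (\<lambda>u. f' u 0)) (at 0)"
    unfolding tendsto_at_iff_sequentially comp_def by auto
  then have "((\<lambda>h. (density_expect w (\<lambda>u. f u h) - density_expect w (\<lambda>u. f u 0)) / h)
      \<longlongrightarrow> density_expect w (\<lambda>u. f' u 0)) (at 0)"
    by (rule Lim_transform_within[OF _ d]) (simp add: qE)
  then show ?thesis unfolding has_field_derivative_iff by simp
qed

end

section \<open>Derivative bounds for the subordinated Green function\<close>

text \<open>The estimates on \<open>G\<close> assumed in the theorem, normalised: the small-time one is used on
  \<open>(0, 1)\<close>, and for \<open>s \<ge> 1\<close> the factor \<open>max (s powr (- k / \<alpha>)) 1 * s powr (- d / \<alpha>)\<close> is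
  at most \<open>1\<close>. Since \<open>\<alpha> < 2\<close>, at most one derivative occurs (\<open>l \<le> 1\<close>).\<close>

locale green_kernel_bounds = stable_law \<beta> w for \<beta> w +
  fixes G :: "real \<Rightarrow> real^'n \<Rightarrow> real^'n \<Rightarrow> real" and \<alpha> A1 A2 :: real and l :: nat
  assumes alpha: "0 < \<alpha>" "\<alpha> < 2" and l_le_1: "l \<le> 1"
    and G_cont: "continuous_on ({0<..} \<times> UNIV \<times> UNIV) (\<lambda>(s, x, y). G s x y)"
    and G_diff: "l \<ge> 1 \<Longrightarrow> \<forall>s>0. \<forall>y x. (\<lambda>x. G s x y) differentiable (at x)"
    and G_diff_cont: "l \<ge> 1 \<Longrightarrow> \<forall>i. continuous_on ({0<..} \<times> UNIV \<times> UNIV) (\<lambda>(s, x, y). pdiff i (\<lambda>x. G s x y) x)"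
    and A_nonneg: "A1 \<ge> 0" "A2 \<ge> 0"
    and G_bound_diag: "\<And>is s z y. length is \<le> l \<Longrightarrow> s > 0 \<Longrightarrow> \<bar>Dk is (\<lambda>x. G s x y) z\<bar> \<le>
        (if s < 1 then A1 * s powr (- real (CARD('n) + length is) / \<alpha>) else exp (A2 * s))"
    and G_bound_offdiag: "\<And>is s z y. length is \<le> l \<Longrightarrow> s > 0 \<Longrightarrow> z \<noteq> y \<Longrightarrow> \<bar>Dk is (\<lambda>x. G s x y) z\<bar> \<le>
        (if s < 1 then A1 * s * norm (z - y) powr (- real (CARD('n) + length is) - \<alpha>)
         else exp (A2 * s) * s * norm (z - y) powr (- real CARD('n) - \<alpha>))"
begin

definition "subord_time t u = t powr \<beta> * u powr (- \<beta>)"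

lemma subord_time_pos: "t > 0 \<Longrightarrow> u > 0 \<Longrightarrow> subord_time t u > 0" unfolding subord_time_def by simp

lemma measurable_subord_comp:
  fixes F :: "real \<Rightarrow> real^'n \<Rightarrow> real^'n \<Rightarrow> real"
  assumes Fc: "continuous_on ({0<..} \<times> UNIV \<times> UNIV) (\<lambda>(s, x, y). F s x y)" and t: "t > 0"
  shows "(\<lambda>u. indicator {0<..} u * F (subord_time t u) z y) \<in> borel_measurable borel"
proof -
  have "continuous_on {0<..} (\<lambda>u. (subord_time t u, z, y))" unfolding subord_time_def by (intro continuous_intros) auto
  moreover have "(\<lambda>u. (subord_time t u, z, y)) ` {0<..} \<subseteq> {0<..} \<times> UNIV" using t subord_time_pos by auto
  ultimately have "continuous_on {0<..} (\<lambda>u. F (subord_time t u) z y)"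
    using continuous_on_compose2[OF Fc, of "{0<..}" "\<lambda>u. (subord_time t u, z, y)"] by simp
  from borel_measurable_continuous_on_indicator[OF _ this] show ?thesis by simp
qed

lemma Gbeta_subordination: assumes t: "t > 0" shows "Gbeta G w \<beta> t x y = density_expect w (\<lambda>u. G (subord_time t u) x y)"
  unfolding Gbeta_def subord_time_def using Gbeta_eq_density_expect[OF G_cont t] .

lemma index_list_cases: assumes "length is \<le> l" obtains "is = []" | i where "is = [i]" "l \<ge> 1"
proof (cases "is")
  case Nil then show ?thesis using that(1) by simp
next
  case (Cons a list)
  then have "list = []" "l \<ge> 1" using assms l_le_1 by (cases list; auto)+
  then show ?thesis using that(2) Cons by simp
qed

lemma measurable_Dk_subord: assumes "length is \<le> l" "t > 0"
  shows "(\<lambda>u. indicator {0<..} u * Dk is (\<lambda>x. G (subord_time t u) x y) z) \<in> borel_measurable borel"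
proof (cases rule: index_list_cases[OF assms(1)])
  case 1 then show ?thesis using measurable_subord_comp[OF G_cont assms(2)] by simp
next
  case (2 i)
  have c: "continuous_on ({0<..} \<times> UNIV \<times> UNIV) (\<lambda>(s, x, y). pdiff i (\<lambda>x. G s x y) x)"
    using G_diff_cont 2 by blast
  show ?thesis using measurable_subord_comp[of "\<lambda>s a b. pdiff i (\<lambda>x. G s x b) a", OF c assms(2), where z=z and y=y] 2 by simp
qed

lemma t_powr_beta_bounds: assumes "0 < t" "t < 1" shows "0 < t powr \<beta>" "t powr \<beta> < 1"
  using assms beta_pos powr_less_mono2[of \<beta> t 1] by auto

lemma subord_time_le: assumes t: "0 < t" "t < 1" and u: "u > 0"
  shows "exp (A2 * subord_time t u) \<le> exp (A2 * u powr (- \<beta>))" "subord_time t u \<le> u powr (- \<beta>)"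
proof -
  show s: "subord_time t u \<le> u powr (- \<beta>)" unfolding subord_time_def using t_powr_beta_bounds[OF t] u by (simp add: mult_le_cancel_right1)
  show "exp (A2 * subord_time t u) \<le> exp (A2 * u powr (- \<beta>))" using s A_nonneg by (simp add: mult_left_mono)
qed

lemma Dk_subord_bound_diag: assumes len: "length is \<le> l" and t: "0 < t" "t < 1" and u: "u > 0"
    and p_def: "p = real (CARD('n) + length is) / \<alpha>"
  shows "\<bar>Dk is (\<lambda>x. G (subord_time t u) x y) z\<bar> \<le>
    A1 * (t powr \<beta>) powr (- p) * u powr (\<beta> * p) + exp (A2 * u powr (- \<beta>))"
proof -
  have sp: "subord_time t u > 0" using subord_time_pos t u by simp
  have tp: "t powr \<beta> > 0" using t by simp
  have nn: "0 \<le> A1 * (t powr \<beta>) powr (- p) * u powr (\<beta> * p)" using A_nonneg by simp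
  show ?thesis
  proof (cases "subord_time t u < 1")
    case True
    have b: "\<bar>Dk is (\<lambda>x. G (subord_time t u) x y) z\<bar> \<le> (if subord_time t u < 1 then A1 * (subord_time t u) powr (- real (CARD('n) + length is) / \<alpha>) else exp (A2 * subord_time t u))"
      by (rule G_bound_diag[OF len sp])
    have e: "- real (CARD('n) + length is) / \<alpha> = - p" unfolding p_def using alpha by (simp add: field_simps)
    have "\<bar>Dk is (\<lambda>x. G (subord_time t u) x y) z\<bar> \<le> A1 * (subord_time t u) powr (- p)"
      using b True unfolding e by simp
    also have "(subord_time t u) powr (- p) = (t powr \<beta>) powr (- p) * u powr (\<beta> * p)"
      unfolding subord_time_def using tp u by (simp add: powr_mult powr_powr)
    finally show ?thesis by (simp add: mult.assoc add_increasing2 del: exp_gt_zero)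
  next
    case False
    have "\<bar>Dk is (\<lambda>x. G (subord_time t u) x y) z\<bar> \<le> exp (A2 * subord_time t u)"
      using G_bound_diag[OF len sp, of y z] False by simp
    also have "\<dots> \<le> exp (A2 * u powr (- \<beta>))" by (rule subord_time_le[OF t u])
    finally show ?thesis using nn by linarith
  qed
qed

lemma Dk_subord_bound_offdiag: assumes len: "length is \<le> l" and t: "0 < t" "t < 1" and u: "u > 0" and z: "z \<noteq> y"
  shows "\<bar>Dk is (\<lambda>x. G (subord_time t u) x y) z\<bar> \<le>
    t powr \<beta> * (A1 * norm (z - y) powr (- real (CARD('n) + length is) - \<alpha>) * u powr (- \<beta>)
      + exp (A2 * u powr (- \<beta>)) * u powr (- \<beta>) * norm (z - y) powr (- real CARD('n) - \<alpha>))"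
proof -
  have sp: "subord_time t u > 0" using subord_time_pos t u by simp
  let ?P = "norm (z - y) powr (- real (CARD('n) + length is) - \<alpha>)"
  let ?Q = "norm (z - y) powr (- real CARD('n) - \<alpha>)"
  have n1: "0 \<le> t powr \<beta> * (A1 * ?P * u powr (- \<beta>))" using A_nonneg by simp
  have n2: "0 \<le> t powr \<beta> * (exp (A2 * u powr (- \<beta>)) * u powr (- \<beta>) * ?Q)" by simp
  show ?thesis
  proof (cases "subord_time t u < 1")
    case True
    have "\<bar>Dk is (\<lambda>x. G (subord_time t u) x y) z\<bar> \<le> A1 * subord_time t u * ?P"
      using G_bound_offdiag[OF len sp z] True by simp
    also have "\<dots> = t powr \<beta> * (A1 * ?P * u powr (- \<beta>))" unfolding subord_time_def by (simp add: algebra_simps)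
    finally show ?thesis using n2 unfolding distrib_left by linarith
  next
    case False
    have "\<bar>Dk is (\<lambda>x. G (subord_time t u) x y) z\<bar> \<le> exp (A2 * subord_time t u) * subord_time t u * ?Q"
      using G_bound_offdiag[OF len sp z] False by simp
    also have "\<dots> \<le> exp (A2 * u powr (- \<beta>)) * subord_time t u * ?Q"
      using subord_time_le[OF t u] sp by (intro mult_right_mono) auto
    also have "\<dots> = t powr \<beta> * (exp (A2 * u powr (- \<beta>)) * u powr (- \<beta>) * ?Q)"
      unfolding subord_time_def by (simp add: algebra_simps)
    finally show ?thesis using n1 unfolding distrib_left by linarith
  qed
qed

lemma offdiag_bound_uniform:
  assumes t: "0 < t" "t < 1" and u: "u > 0" and d0: "\<delta> > 0" and r: "\<delta> \<le> r" and m: "m \<le> 1"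
  shows "t powr \<beta> * (A1 * r powr (- real (CARD('n) + m) - \<alpha>) * u powr (- \<beta>)
      + exp (A2 * u powr (- \<beta>)) * u powr (- \<beta>) * r powr (- real CARD('n) - \<alpha>))
    \<le> t powr \<beta> * (A1 * \<delta> powr (- real (CARD('n) + 1) - \<alpha>) + A1 * \<delta> powr (- real CARD('n) - \<alpha>)
         + \<delta> powr (- real CARD('n) - \<alpha>)) * (exp (A2 * u powr (- \<beta>)) * u powr (- \<beta>))"
proof -
  let ?E = "exp (A2 * u powr (- \<beta>)) * u powr (- \<beta>)"
  have e1: "u powr (- \<beta>) \<le> ?E" using A_nonneg u by (simp add: mult_le_cancel_right1)
  have p2: "r powr (- real CARD('n) - \<alpha>) \<le> \<delta> powr (- real CARD('n) - \<alpha>)"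
    using r d0 alpha by (intro powr_mono2') auto
  have p1: "r powr (- real (CARD('n) + m) - \<alpha>) \<le> \<delta> powr (- real (CARD('n) + 1) - \<alpha>) + \<delta> powr (- real CARD('n) - \<alpha>)"
  proof (cases "m = 0")
    case True
    then show ?thesis using p2 by (simp add: add_increasing)
  next
    case False
    then have "m = 1" using m by simp
    then have "r powr (- real (CARD('n) + m) - \<alpha>) \<le> \<delta> powr (- real (CARD('n) + 1) - \<alpha>)"
      using r d0 alpha powr_mono2'[of "- real (CARD('n) + 1) - \<alpha>" \<delta> r] by simp
    then show ?thesis by (simp add: add_increasing2)
  qed
  have "A1 * r powr (- real (CARD('n) + m) - \<alpha>) * u powr (- \<beta>) \<le>
      A1 * (\<delta> powr (- real (CARD('n) + 1) - \<alpha>) + \<delta> powr (- real CARD('n) - \<alpha>)) * ?E"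
    using p1 e1 A_nonneg by (intro mult_mono) auto
  moreover have "?E * r powr (- real CARD('n) - \<alpha>) \<le> ?E * \<delta> powr (- real CARD('n) - \<alpha>)"
    using p2 by (intro mult_left_mono) auto
  ultimately have "A1 * r powr (- real (CARD('n) + m) - \<alpha>) * u powr (- \<beta>) + ?E * r powr (- real CARD('n) - \<alpha>)
      \<le> (A1 * \<delta> powr (- real (CARD('n) + 1) - \<alpha>) + A1 * \<delta> powr (- real CARD('n) - \<alpha>)
         + \<delta> powr (- real CARD('n) - \<alpha>)) * ?E"
    by (simp add: algebra_simps)
  then show ?thesis using t by (simp add: mult.assoc mult_left_mono)
qed

lemma Dk_subord_bound_away:
  assumes len: "length is \<le> l" and t: "0 < t" "t < 1" and u: "u > 0"
    and \<delta>: "0 < \<delta>" "\<delta> \<le> norm (z - y)"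
  shows "\<bar>Dk is (\<lambda>x. G (subord_time t u) x y) z\<bar>
    \<le> t powr \<beta> * (A1 * \<delta> powr (- real (CARD('n) + 1) - \<alpha>) + A1 * \<delta> powr (- real CARD('n) - \<alpha>)
         + \<delta> powr (- real CARD('n) - \<alpha>)) * (exp (A2 * u powr (- \<beta>)) * u powr (- \<beta>))"
proof -
  have "z \<noteq> y" using \<delta> by auto
  from Dk_subord_bound_offdiag[OF len t u this] show ?thesis
    using offdiag_bound_uniform[OF t u \<delta>, of "length is"] len l_le_1 by linarith
qed

lemma pdiff_Gbeta: assumes l: "l \<ge> 1" and t: "0 < t" "t < 1" and xy: "x \<noteq> y"
  shows "pdiff i (\<lambda>x. Gbeta G w \<beta> t x y) x = density_expect w (\<lambda>u. pdiff i (\<lambda>x. G (subord_time t u) x y) x)"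
proof -
  define e :: "real^'n" where "e = axis i 1"
  define \<rho> where "\<rho> = norm (x - y)"
  have \<rho>: "\<rho> > 0" unfolding \<rho>_def using xy by simp
  define \<delta> where "\<delta> = \<rho> / 2"
  have d0: "\<delta> > 0" unfolding \<delta>_def using \<rho> by simp
  define f where "f u h = G (subord_time t u) (x + h *\<^sub>R e) y" for u h
  define f' where "f' u h = pdiff i (\<lambda>x. G (subord_time t u) x y) (x + h *\<^sub>R e)" for u h
  define K where "K = t powr \<beta> * (A1 * \<delta> powr (- real (CARD('n) + 1) - \<alpha>) + A1 * \<delta> powr (- real CARD('n) - \<alpha>)
         + \<delta> powr (- real CARD('n) - \<alpha>))"
  define B where "B u = K * (exp (A2 * u powr (- \<beta>)) * u powr (- \<beta>))" for u
  have far: "norm (x + h *\<^sub>R e - y) \<ge> \<delta>" if h: "\<bar>h\<bar> < \<delta>" for h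
  proof -
    have "\<rho> \<le> norm (x + h *\<^sub>R e - y) + norm (h *\<^sub>R e)" unfolding \<rho>_def
      using norm_triangle_ineq[of "x + h *\<^sub>R e - y" "- (h *\<^sub>R e)"] by simp
    moreover have "norm (h *\<^sub>R e) = \<bar>h\<bar>" unfolding e_def by simp
    ultimately show ?thesis using h unfolding \<delta>_def by linarith
  qed
  have der: "((\<lambda>h. f u h) has_real_derivative f' u h) (at h)" if "u > 0" "\<bar>h\<bar> < \<delta>" for u h
  proof -
    have "(\<lambda>x. G (subord_time t u) x y) differentiable (at (x + h *\<^sub>R e))"
      using G_diff[OF l] subord_time_pos[OF t(1) that(1)] by blast
    then show ?thesis unfolding f_def f'_def e_def by (rule pdiff_has_real_derivative)
  qed
  have bnd: "\<bar>f' u h\<bar> \<le> B u" if "u > 0" "\<bar>h\<bar> < \<delta>" for u h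
  proof -
    have "length [i] \<le> l" using l by simp
    from Dk_subord_bound_away[OF this t that(1) d0 far[OF that(2)]] show ?thesis
      unfolding f'_def B_def K_def by (simp add: mult.assoc)
  qed
  have BI: "density_integrable w B"
    unfolding B_def by (rule density_expect_cmult(1)[OF integrable_exp_neg_power_times[OF A_nonneg(2)]])
  have fm: "(\<lambda>u. indicator {0<..} u * f u h) \<in> borel_measurable borel" for h
    unfolding f_def using measurable_subord_comp[OF G_cont t(1)] by simp
  have f0I: "density_integrable w (\<lambda>u. f u 0)"
  proof (rule density_integrable_bound[OF BI fm])
    show "\<bar>f u 0\<bar> \<le> B u" if "u > 0" for u
    proof -
      have "length ([] :: 'n list) \<le> l" "\<delta> \<le> norm (x - y)" using \<rho> by (simp_all add: \<delta>_def \<rho>_def)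
      from Dk_subord_bound_away[OF this(1) t that d0 this(2)] show ?thesis
        unfolding f_def B_def K_def by (simp add: mult.assoc)
    qed
  qed
  have f'm: "(\<lambda>u. indicator {0<..} u * f' u 0) \<in> borel_measurable borel"
    using measurable_Dk_subord[of "[i]" t y x] l t unfolding f'_def by simp
  have D: "((\<lambda>h. density_expect w (\<lambda>u. f u h)) has_real_derivative density_expect w (\<lambda>u. f' u 0)) (at 0)"
    by (rule has_real_derivative_density_expect[OF d0 der bnd BI fm f0I f'm])
  have eq: "(\<lambda>h. Gbeta G w \<beta> t (x + h *\<^sub>R e) y) = (\<lambda>h. density_expect w (\<lambda>u. f u h))"
    unfolding f_def using Gbeta_subordination[OF t(1)] by simp
  have "pdiff i (\<lambda>x. Gbeta G w \<beta> t x y) x = density_expect w (\<lambda>u. f' u 0)"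
    unfolding pdiff_def e_def[symmetric] eq by (rule DERIV_imp_deriv[OF D])
  then show ?thesis unfolding f'_def by simp
qed

lemma Dk_Gbeta: assumes len: "length is \<le> l" and t: "0 < t" "t < 1" and c: "is = [] \<or> x \<noteq> y"
  shows "Dk is (\<lambda>x. Gbeta G w \<beta> t x y) x = density_expect w (\<lambda>u. Dk is (\<lambda>x. G (subord_time t u) x y) x)"
proof (cases rule: index_list_cases[OF len])
  case 1 then show ?thesis using Gbeta_subordination[OF t(1)] by simp
next
  case (2 i)
  then show ?thesis using pdiff_Gbeta[OF 2(2) t, of x y i] c by simp
qed

lemma t_powr_scaled: "t > 0 \<Longrightarrow> t powr (- real m * \<beta> / \<alpha>) = (t powr \<beta>) powr (- (real m / \<alpha>))"
  by (simp add: powr_powr algebra_simps)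

lemma Dk_Gbeta_bound_offdiag:
  assumes len: "length is \<le> l" and t: "0 < t" "t < 1" and xy: "x \<noteq> y"
    and P: "norm (x - y) powr (- real (CARD('n) + length is) - \<alpha>) \<le> P"
      "norm (x - y) powr (- real CARD('n) - \<alpha>) \<le> P"
  shows "\<bar>Dk is (\<lambda>x. Gbeta G w \<beta> t x y) x\<bar>
    \<le> (A1 * neg_moment + exp_neg_moment A2) * (t powr \<beta> * P)"
proof -
  have P0: "0 \<le> P" using P(2) by (meson order_trans powr_ge_zero)
  have "\<bar>Dk is (\<lambda>x. G (subord_time t u) x y) x\<bar>
      \<le> t powr \<beta> * P * (A1 * u powr (- \<beta>) + exp (A2 * u powr (- \<beta>)) * u powr (- \<beta>))"
    if u: "u > 0" for u
  proof -
    let ?E = "exp (A2 * u powr (- \<beta>)) * u powr (- \<beta>)"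
    have "A1 * norm (x - y) powr (- real (CARD('n) + length is) - \<alpha>) * u powr (- \<beta>) \<le> A1 * P * u powr (- \<beta>)"
      using P(1) A_nonneg by (intro mult_right_mono mult_left_mono) auto
    moreover have "?E * norm (x - y) powr (- real CARD('n) - \<alpha>) \<le> ?E * P"
      by (rule mult_left_mono[OF P(2)]) simp
    ultimately have "t powr \<beta> * (A1 * norm (x - y) powr (- real (CARD('n) + length is) - \<alpha>) * u powr (- \<beta>)
        + ?E * norm (x - y) powr (- real CARD('n) - \<alpha>)) \<le> t powr \<beta> * (A1 * P * u powr (- \<beta>) + ?E * P)"
      by (rule mult_left_mono[OF add_mono]) simp
    also have "\<dots> = t powr \<beta> * P * (A1 * u powr (- \<beta>) + ?E)" by (simp add: algebra_simps)
    finally show ?thesis using Dk_subord_bound_offdiag[OF len t u xy] by linarith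
  qed
  then have "\<bar>density_expect w (\<lambda>u. Dk is (\<lambda>x. G (subord_time t u) x y) x)\<bar>
      \<le> t powr \<beta> * P * (A1 * neg_moment + exp_neg_moment A2)"
    by (intro density_expect_le_neg_moments[OF A_nonneg]) (use P0 in auto)
  then show ?thesis using Dk_Gbeta[OF len t] xy by (simp add: mult_ac)
qed

lemma bound_intermediate:
  assumes len: "length is \<le> l" and t: "0 < t" "t < 1"
    and \<Omega>: "\<Omega> = norm (x - y) powr \<alpha> * t powr (- \<beta>)" and O: "1 \<le> \<Omega>" "\<Omega> \<le> t powr (- \<beta>)"
  shows "\<bar>Dk is (\<lambda>x. Gbeta G w \<beta> t x y) x\<bar> \<le> (A1 * neg_moment + exp_neg_moment A2) *
     (t powr (- real (CARD('n) + length is) * \<beta> / \<alpha>) * \<Omega> powr (- 1 - real (CARD('n) + length is) / \<alpha>))"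
proof -
  have xy: "x \<noteq> y" using O(1) \<Omega> by auto
  have "norm (x - y) powr \<alpha> \<le> 1" using O t \<Omega> by simp
  then have "norm (x - y) \<le> 1" using alpha powr_le_one_iff by simp
  then have "norm (x - y) powr (- real CARD('n) - \<alpha>) \<le> norm (x - y) powr (- real (CARD('n) + length is) - \<alpha>)"
    using xy by (intro powr_mono') auto
  from Dk_Gbeta_bound_offdiag[OF len t xy order_refl this] show ?thesis
    using offdiag_scaling[of "norm (x - y)" t \<alpha> \<beta> "real (CARD('n) + length is)"] xy t alpha
    unfolding \<Omega> by simp
qed

lemma bound_far:
  assumes len: "length is \<le> l" and t: "0 < t" "t < 1"
    and \<Omega>: "\<Omega> = norm (x - y) powr \<alpha> * t powr (- \<beta>)" and O: "t powr (- \<beta>) \<le> \<Omega>"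
  shows "\<bar>Dk is (\<lambda>x. Gbeta G w \<beta> t x y) x\<bar> \<le> (A1 * neg_moment + exp_neg_moment A2) *
     (t powr (- real CARD('n) * \<beta> / \<alpha>) * \<Omega> powr (- 1 - real CARD('n) / \<alpha>))"
proof -
  have "1 \<le> norm (x - y) powr \<alpha>" using O t \<Omega> by simp
  then have xy: "x \<noteq> y" by auto
  have "1 \<le> norm (x - y)"
  proof (rule ccontr)
    assume "\<not> 1 \<le> norm (x - y)"
    then have "norm (x - y) powr \<alpha> < 1 powr \<alpha>" using alpha by (intro powr_less_mono2) auto
    then show False using \<open>1 \<le> norm (x - y) powr \<alpha>\<close> by simp
  qed
  then have "norm (x - y) powr (- real (CARD('n) + length is) - \<alpha>) \<le> norm (x - y) powr (- real CARD('n) - \<alpha>)"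
    by (intro powr_mono) auto
  from Dk_Gbeta_bound_offdiag[OF len t xy this order_refl] show ?thesis
    using offdiag_scaling[of "norm (x - y)" t \<alpha> \<beta> "real CARD('n)"] xy t alpha
    unfolding \<Omega> by simp
qed

lemma bound_near_subcritical:
  assumes len: "length is \<le> l" and t: "0 < t" "t < 1"
    and lt: "real (CARD('n) + length is) < \<alpha>"
  shows "\<bar>Dk is (\<lambda>x. Gbeta G w \<beta> t x y) x\<bar>
    \<le> (A1 * low_moment_const (\<beta> * (real CARD('n) / \<alpha>)) + exp_moment A2)
       * t powr (- real (CARD('n) + length is) * \<beta> / \<alpha>)"
proof -
  have card: "CARD('n) \<ge> 1" using zero_less_card_finite[where 'a='n] by linarith
  moreover have "CARD('n) + length is < 2" using lt alpha by linarith
  ultimately have "length is = 0" by linarith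
  then have is0: "is = []" by simp
  define p where "p = real (CARD('n) + length is) / \<alpha>"
  have "0 < real (CARD('n) + length is)" by (simp only: of_nat_0_less_iff) (use card in linarith)
  then have p: "0 < p" "p < 1" unfolding p_def using lt alpha by (simp_all add: divide_less_eq)
  define T where "T = (t powr \<beta>) powr (- p)"
  have T: "T \<ge> 1" unfolding T_def using one_le_powr_neg t_powr_beta_bounds[OF t] p by simp
  have q: "0 < \<beta> * p" "\<beta> * p < \<beta>" using p beta_pos by auto
  have "\<bar>Dk is (\<lambda>x. Gbeta G w \<beta> t x y) x\<bar> = \<bar>density_expect w (\<lambda>u. Dk is (\<lambda>x. G (subord_time t u) x y) x)\<bar>"
    using Dk_Gbeta[OF len t] is0 by simp
  also have "\<dots> \<le> T * (A1 * low_moment_const (\<beta> * p) + exp_moment A2)"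
    by (rule density_expect_le_low_moment[OF A_nonneg q T]) (use Dk_subord_bound_diag[OF len t _ p_def] in \<open>simp add: T_def\<close>)
  finally show ?thesis
    using t_powr_scaled[OF t(1), of "CARD('n) + length is"] is0 by (simp add: T_def p_def mult.commute)
qed

text \<open>Near the diagonal the subordinated time is split at \<open>U = \<Omega> powr (-1/\<beta>)\<close>: beyond it
  the small-time off-diagonal bound applies, below it the on-diagonal one.\<close>

lemma Dk_subord_bound_split:
  assumes len: "length is \<le> l" and t: "0 < t" "t < 1" and xy: "x \<noteq> y" and u: "u > 0"
    and a: "0 < a" "t powr \<beta> * a powr (- \<beta>) < 1" and p: "p = real (CARD('n) + length is) / \<alpha>"
  shows "\<bar>Dk is (\<lambda>x. G (subord_time t u) x y) x\<bar>
    \<le> A1 * t powr \<beta> * norm (x - y) powr (- real (CARD('n) + length is) - \<alpha>) * (u powr (- \<beta>) * indicator {a..} u)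
      + A1 * (t powr \<beta>) powr (- p) * (u powr (\<beta> * p) * indicator {..<a} u) + exp (A2 * u powr (- \<beta>))"
proof (cases "a \<le> u")
  case True
  have sp: "subord_time t u > 0" using subord_time_pos t u by simp
  have "subord_time t u \<le> t powr \<beta> * a powr (- \<beta>)" unfolding subord_time_def
    using True a(1) beta_pos t by (intro mult_left_mono powr_mono2') auto
  then have "subord_time t u < 1" using a(2) by simp
  then have "\<bar>Dk is (\<lambda>x. G (subord_time t u) x y) x\<bar>
      \<le> A1 * subord_time t u * norm (x - y) powr (- real (CARD('n) + length is) - \<alpha>)"
    using G_bound_offdiag[OF len sp xy] by simp
  also have "\<dots> = A1 * t powr \<beta> * norm (x - y) powr (- real (CARD('n) + length is) - \<alpha>)
      * (u powr (- \<beta>) * indicator {a..} u)"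
    unfolding subord_time_def using True by (simp add: algebra_simps)
  finally show ?thesis using True by (simp add: add_increasing2 less_imp_le del: exp_gt_zero)
next
  case False
  then show ?thesis using Dk_subord_bound_diag[OF len t u p] by (simp add: indicator_def)
qed

lemma bound_near_common:
  assumes len: "length is \<le> l" and t: "0 < t" "t < 1" and xy: "x \<noteq> y"
    and \<Omega>: "\<Omega> = norm (x - y) powr \<alpha> * t powr (- \<beta>)" and O: "\<Omega> \<le> 1"
    and a: "a = \<Omega> powr (- 1 / \<beta>)" and p: "p = real (CARD('n) + length is) / \<alpha>"
    and IT: "density_integrable w (\<lambda>u. u powr (\<beta> * p) * indicator {..<a} u)"
  shows "\<bar>Dk is (\<lambda>x. Gbeta G w \<beta> t x y) x\<bar> \<le> A1 * (t powr \<beta>) powr (- p) *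
       (tail_const * \<Omega> powr (1 - p) + density_expect w (\<lambda>u. u powr (\<beta> * p) * indicator {..<a} u))
     + exp_moment A2"
proof -
  have O0: "\<Omega> > 0" using xy t by (simp add: \<Omega>)
  have a1: "a \<ge> 1" unfolding a using one_le_powr_neg[OF O0 O] beta_pos by simp
  have aO: "a powr (- \<beta>) = \<Omega>" "a powr (- 2 * \<beta>) = \<Omega>\<^sup>2"
    unfolding a using O0 beta_pos by (simp_all add: powr_powr powr_realpow)
  have "t powr \<beta> * a powr (- \<beta>) \<le> t powr \<beta>" using O by (simp add: aO mult_left_le)
  then have "t powr \<beta> * a powr (- \<beta>) < 1" using t_powr_beta_bounds[OF t] by linarith
  note H = Dk_subord_bound_split[OF len t xy _ _ this p]
  define M1 where "M1 = A1 * t powr \<beta> * norm (x - y) powr (- real (CARD('n) + length is) - \<alpha>)"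
  define M2 where "M2 = A1 * (t powr \<beta>) powr (- p)"
  have "t powr \<beta> * norm (x - y) powr (- real (CARD('n) + length is) - \<alpha>) * \<Omega>\<^sup>2
      = (t powr \<beta>) powr (- p) * \<Omega> powr (1 - p)"
    unfolding \<Omega> p by (rule offdiag_scaling_sq) (use xy t alpha in auto)
  then have tail: "M1 * (tail_const * a powr (- 2 * \<beta>)) = M2 * (tail_const * \<Omega> powr (1 - p))"
    unfolding M1_def M2_def aO(2) by (metis mult.assoc mult.left_commute)
  have q: "0 < \<beta> * p" unfolding p using beta_pos alpha by (simp add: add_pos_nonneg)
  have "\<bar>Dk is (\<lambda>x. Gbeta G w \<beta> t x y) x\<bar> = \<bar>density_expect w (\<lambda>u. Dk is (\<lambda>x. G (subord_time t u) x y) x)\<bar>"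
    using Dk_Gbeta[OF len t] xy by simp
  also have "\<dots> \<le> M1 * (tail_const * a powr (- 2 * \<beta>))
      + M2 * density_expect w (\<lambda>u. u powr (\<beta> * p) * indicator {..<a} u) + exp_moment A2"
    by (rule density_expect_le_split_moment[OF A_nonneg(2) _ _ q a1 _ IT])
      (use A_nonneg H a1 in \<open>simp_all add: M1_def M2_def\<close>)
  finally show ?thesis unfolding tail by (simp add: M2_def distrib_left)
qed

lemma bound_near_supercritical:
  assumes len: "length is \<le> l" and t: "0 < t" "t < 1" and xy: "x \<noteq> y"
    and \<Omega>: "\<Omega> = norm (x - y) powr \<alpha> * t powr (- \<beta>)" and O: "\<Omega> \<le> 1"
    and gt: "real (CARD('n) + length is) > \<alpha>"
  shows "\<bar>Dk is (\<lambda>x. Gbeta G w \<beta> t x y) x\<bar>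
    \<le> (A1 * tail_const + A1 * trunc_const_gt (\<beta> * (real (CARD('n) + length is) / \<alpha>)) + exp_moment A2)
       * (t powr (- real (CARD('n) + length is) * \<beta> / \<alpha>) * \<Omega> powr (1 - real (CARD('n) + length is) / \<alpha>))"
proof -
  define p where "p = real (CARD('n) + length is) / \<alpha>"
  define a where "a = \<Omega> powr (- 1 / \<beta>)"
  have O0: "\<Omega> > 0" using xy t by (simp add: \<Omega>)
  have p1: "p > 1" unfolding p_def using gt alpha by (simp add: less_divide_eq)
  have a1: "a \<ge> 1" unfolding a_def using one_le_powr_neg[OF O0 O] beta_pos by simp
  have qb: "\<beta> < \<beta> * p" using p1 beta_pos by simp
  define T where "T = (t powr \<beta>) powr (- p) * \<Omega> powr (1 - p)"
  have "1 \<le> (t powr \<beta>) powr (- p)" "1 \<le> \<Omega> powr (1 - p)"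
    using one_le_powr_neg[of "t powr \<beta>" p] one_le_powr_neg[OF O0 O, of "p - 1"] t_powr_beta_bounds[OF t] p1
    by simp_all
  then have T: "T \<ge> 1" unfolding T_def using mult_mono[of 1 _ 1] by fastforce
  have E0T: "exp_moment A2 \<le> exp_moment A2 * T"
    using T exp_moment_nonneg[of A2] by (simp add: mult_le_cancel_left1)
  have "density_expect w (\<lambda>u. u powr (\<beta> * p) * indicator {..<a} u) \<le> trunc_const_gt (\<beta> * p) * a powr (\<beta> * p - \<beta>)"
    by (rule truncated_moment_bound_gt(2)[OF qb a1])
  also have "- 1 / \<beta> * (\<beta> * p - \<beta>) = 1 - p" using beta_pos by (simp add: field_simps)
  then have "a powr (\<beta> * p - \<beta>) = \<Omega> powr (1 - p)" unfolding a_def powr_powr by simp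
  finally have E: "density_expect w (\<lambda>u. u powr (\<beta> * p) * indicator {..<a} u) \<le> trunc_const_gt (\<beta> * p) * \<Omega> powr (1 - p)" .
  have "\<bar>Dk is (\<lambda>x. Gbeta G w \<beta> t x y) x\<bar> \<le> A1 * (t powr \<beta>) powr (- p) *
       (tail_const * \<Omega> powr (1 - p) + density_expect w (\<lambda>u. u powr (\<beta> * p) * indicator {..<a} u))
     + exp_moment A2"
    by (rule bound_near_common[OF len t xy \<Omega> O a_def p_def truncated_moment_bound_gt(1)[OF qb a1]])
  also have "\<dots> \<le> A1 * (t powr \<beta>) powr (- p) * (tail_const * \<Omega> powr (1 - p) + trunc_const_gt (\<beta> * p) * \<Omega> powr (1 - p))
     + exp_moment A2 * T"
    using E E0T A_nonneg tail_const_pos by (intro add_mono mult_left_mono) auto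
  also have "\<dots> = (A1 * tail_const + A1 * trunc_const_gt (\<beta> * p) + exp_moment A2) * T"
    by (simp add: T_def algebra_simps)
  finally have "\<bar>Dk is (\<lambda>x. Gbeta G w \<beta> t x y) x\<bar>
    \<le> (A1 * tail_const + A1 * trunc_const_gt (\<beta> * p) + exp_moment A2) * T" .
  moreover have "(t powr \<beta>) powr (- p) = t powr (- real (CARD('n) + length is) * \<beta> / \<alpha>)"
    unfolding p_def by (rule t_powr_scaled[OF t(1), symmetric])
  ultimately show ?thesis unfolding T_def p_def by simp
qed

lemma bound_near_critical:
  assumes len: "length is \<le> l" and t: "0 < t" "t < 1" and xy: "x \<noteq> y"
    and \<Omega>: "\<Omega> = norm (x - y) powr \<alpha> * t powr (- \<beta>)" and O: "\<Omega> \<le> 1"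
    and eq: "real (CARD('n) + length is) = \<alpha>"
  shows "\<bar>Dk is (\<lambda>x. Gbeta G w \<beta> t x y) x\<bar> \<le>
    (A1 * tail_const + A1 * trunc_const_eq / \<beta> + exp_moment A2) * (t powr (- \<beta>) * (\<bar>ln \<Omega>\<bar> + 1))"
proof -
  define a where "a = \<Omega> powr (- 1 / \<beta>)"
  define L where "L = \<bar>ln \<Omega>\<bar> + 1"
  have O0: "\<Omega> > 0" using xy t by (simp add: \<Omega>)
  have p1: "real (CARD('n) + length is) / \<alpha> = 1" using eq alpha by simp
  have a1: "a \<ge> 1" unfolding a_def using one_le_powr_neg[OF O0 O] beta_pos by simp
  have L1: "L \<ge> 1" unfolding L_def by simp
  have Ti: "t powr (- \<beta>) \<ge> 1" using one_le_powr_neg[of t \<beta>] t beta_pos by simp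
  have "ln a = \<bar>ln \<Omega>\<bar> / \<beta>" unfolding a_def using O0 O by (simp add: ln_powr abs_if field_simps)
  then have "1 + ln a \<le> L / \<beta>" using beta_pos beta_lt_1 by (simp add: L_def field_simps)
  have "density_expect w (\<lambda>u. u powr \<beta> * indicator {..<a} u) \<le> trunc_const_eq * (1 + ln a)"
    by (rule truncated_moment_bound_eq(2)[OF a1])
  also have "\<dots> \<le> trunc_const_eq * (L / \<beta>)"
    by (intro mult_left_mono) (use \<open>1 + ln a \<le> L / \<beta>\<close> trunc_const_eq_nonneg in auto)
  finally have E: "density_expect w (\<lambda>u. u powr \<beta> * indicator {..<a} u) \<le> trunc_const_eq / \<beta> * L"
    by simp
  have tb: "(t powr \<beta>) powr (- 1) = t powr (- \<beta>)" by (simp add: powr_powr powr_minus_divide)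
  have "\<bar>Dk is (\<lambda>x. Gbeta G w \<beta> t x y) x\<bar> \<le> A1 * (t powr \<beta>) powr (- 1) *
       (tail_const * \<Omega> powr (1 - 1) + density_expect w (\<lambda>u. u powr (\<beta> * 1) * indicator {..<a} u))
     + exp_moment A2"
    by (rule bound_near_common[OF len t xy \<Omega> O a_def p1[symmetric]])
      (use truncated_moment_bound_eq(1)[OF a1] in simp)
  also have "\<dots> \<le> A1 * t powr (- \<beta>) * (tail_const * L + trunc_const_eq / \<beta> * L) + exp_moment A2 * (t powr (- \<beta>) * L)"
  proof (rule add_mono)
    have "tail_const \<le> tail_const * L" using L1 tail_const_pos by simp
    then have "tail_const * \<Omega> powr (1 - 1) + density_expect w (\<lambda>u. u powr (\<beta> * 1) * indicator {..<a} u)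
        \<le> tail_const * L + trunc_const_eq / \<beta> * L"
      using E O0 by simp
    then show "A1 * (t powr \<beta>) powr (- 1) * (tail_const * \<Omega> powr (1 - 1)
        + density_expect w (\<lambda>u. u powr (\<beta> * 1) * indicator {..<a} u))
        \<le> A1 * t powr (- \<beta>) * (tail_const * L + trunc_const_eq / \<beta> * L)"
      unfolding tb using A_nonneg by (intro mult_left_mono) auto
    have "1 \<le> t powr (- \<beta>) * L" using Ti L1 mult_mono[of 1 _ 1] by fastforce
    then show "exp_moment A2 \<le> exp_moment A2 * (t powr (- \<beta>) * L)"
      using exp_moment_nonneg[of A2] by (simp add: mult_le_cancel_left1)
  qed
  also have "\<dots> = (A1 * tail_const + A1 * trunc_const_eq / \<beta> + exp_moment A2) * (t powr (- \<beta>) * L)"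
    by (simp add: algebra_simps)
  finally show ?thesis unfolding L_def .
qed

lemma Gbeta_derivative_bounds:
  "\<exists>C>0. \<forall>is. length is \<le> l \<longrightarrow>
     (\<forall>t\<in>{0<..<1}. \<forall>x y.
        let k = length is;
            D = \<bar>Dk is (\<lambda>x. Gbeta G w \<beta> t x y) x\<bar>;
            \<Omega> = norm (x - y) powr \<alpha> * t powr (- \<beta>)
        in (\<Omega> \<le> 1 \<longrightarrow>
              (real (CARD('n) + k) < \<alpha> \<longrightarrow> D \<le> C * t powr (- real (CARD('n) + k) * \<beta> / \<alpha>)) \<and>
              (real (CARD('n) + k) = \<alpha> \<and> x \<noteq> y \<longrightarrow> D \<le> C * t powr (- \<beta>) * (\<bar>ln \<Omega>\<bar> + 1)) \<and>
              (real (CARD('n) + k) > \<alpha> \<and> x \<noteq> y \<longrightarrow>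
                 D \<le> C * t powr (- real (CARD('n) + k) * \<beta> / \<alpha>) * \<Omega> powr (1 - real (CARD('n) + k) / \<alpha>))) \<and>
           (1 \<le> \<Omega> \<and> \<Omega> \<le> t powr (- \<beta>) \<longrightarrow>
              D \<le> C * t powr (- real (CARD('n) + k) * \<beta> / \<alpha>) * \<Omega> powr (- 1 - real (CARD('n) + k) / \<alpha>)) \<and>
           (\<Omega> \<ge> t powr (- \<beta>) \<longrightarrow>
              D \<le> C * t powr (- real CARD('n) * \<beta> / \<alpha>) * \<Omega> powr (- 1 - real CARD('n) / \<alpha>)))"
proof -
  define K_sub where "K_sub = A1 * low_moment_const (\<beta> * (real CARD('n) / \<alpha>)) + exp_moment A2"
  define K_crit where "K_crit = A1 * tail_const + A1 * trunc_const_eq / \<beta> + exp_moment A2"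
  define K_sup where
    "K_sup k = A1 * tail_const + A1 * trunc_const_gt (\<beta> * (real (CARD('n) + k) / \<alpha>)) + exp_moment A2"
    for k :: nat
  define K_off where "K_off = A1 * neg_moment + exp_neg_moment A2"
  define C where "C = 1 + \<bar>K_sub\<bar> + \<bar>K_crit\<bar> + \<bar>K_sup 0\<bar> + \<bar>K_sup 1\<bar> + \<bar>K_off\<bar>"
  have C: "C > 0" "\<bar>K_sub\<bar> \<le> C" "\<bar>K_crit\<bar> \<le> C" "\<bar>K_off\<bar> \<le> C" "\<And>k. k \<le> 1 \<Longrightarrow> \<bar>K_sup k\<bar> \<le> C"
    unfolding C_def by (auto simp: le_Suc_eq)
  show ?thesis
  proof (intro exI[of _ C] conjI C(1) allI impI ballI)
    fix "is" :: "'n list" and t :: real and x y :: "real^'n"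
    assume len: "length is \<le> l" and "t \<in> {0<..<1}"
    then have t: "0 < t" "t < 1" by auto
    define \<Omega> where "\<Omega> = norm (x - y) powr \<alpha> * t powr (- \<beta>)"
    define D where "D = \<bar>Dk is (\<lambda>x. Gbeta G w \<beta> t x y) x\<bar>"
    have sub: "D \<le> C * t powr (- real (CARD('n) + length is) * \<beta> / \<alpha>)"
      if "real (CARD('n) + length is) < \<alpha>"
      using le_const_mult[OF bound_near_subcritical[OF len t that, where x=x and y=y, folded K_sub_def D_def] _ C(2)] by simp
    have crit: "D \<le> C * t powr (- \<beta>) * (\<bar>ln \<Omega>\<bar> + 1)"
      if "\<Omega> \<le> 1" "real (CARD('n) + length is) = \<alpha>" "x \<noteq> y"
      using le_const_mult[OF bound_near_critical[OF len t that(3) \<Omega>_def that(1,2), folded K_crit_def D_def] _ C(3)]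
      by (simp add: mult.assoc)
    have sup: "D \<le> C * t powr (- real (CARD('n) + length is) * \<beta> / \<alpha>)
        * \<Omega> powr (1 - real (CARD('n) + length is) / \<alpha>)"
      if "\<Omega> \<le> 1" "real (CARD('n) + length is) > \<alpha>" "x \<noteq> y"
      using le_const_mult[OF bound_near_supercritical[OF len t that(3) \<Omega>_def that(1,2),
            folded K_sup_def D_def] _ C(5)] len l_le_1
      by (simp add: mult.assoc)
    have mid: "D \<le> C * t powr (- real (CARD('n) + length is) * \<beta> / \<alpha>)
        * \<Omega> powr (- 1 - real (CARD('n) + length is) / \<alpha>)"
      if "1 \<le> \<Omega>" "\<Omega> \<le> t powr (- \<beta>)"
      using le_const_mult[OF bound_intermediate[OF len t \<Omega>_def that, folded K_off_def D_def] _ C(4)]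
      by (simp add: mult.assoc)
    have far: "D \<le> C * t powr (- real CARD('n) * \<beta> / \<alpha>) * \<Omega> powr (- 1 - real CARD('n) / \<alpha>)"
      if "t powr (- \<beta>) \<le> \<Omega>"
      using le_const_mult[OF bound_far[OF len t \<Omega>_def that, folded K_off_def D_def] _ C(4)]
      by (simp add: mult.assoc)
    show "let k = length is;
            D = \<bar>Dk is (\<lambda>x. Gbeta G w \<beta> t x y) x\<bar>;
            \<Omega> = norm (x - y) powr \<alpha> * t powr (- \<beta>)
        in (\<Omega> \<le> 1 \<longrightarrow>
              (real (CARD('n) + k) < \<alpha> \<longrightarrow> D \<le> C * t powr (- real (CARD('n) + k) * \<beta> / \<alpha>)) \<and>
              (real (CARD('n) + k) = \<alpha> \<and> x \<noteq> y \<longrightarrow> D \<le> C * t powr (- \<beta>) * (\<bar>ln \<Omega>\<bar> + 1)) \<and>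
              (real (CARD('n) + k) > \<alpha> \<and> x \<noteq> y \<longrightarrow>
                 D \<le> C * t powr (- real (CARD('n) + k) * \<beta> / \<alpha>) * \<Omega> powr (1 - real (CARD('n) + k) / \<alpha>))) \<and>
           (1 \<le> \<Omega> \<and> \<Omega> \<le> t powr (- \<beta>) \<longrightarrow>
              D \<le> C * t powr (- real (CARD('n) + k) * \<beta> / \<alpha>) * \<Omega> powr (- 1 - real (CARD('n) + k) / \<alpha>)) \<and>
           (\<Omega> \<ge> t powr (- \<beta>) \<longrightarrow>
              D \<le> C * t powr (- real CARD('n) * \<beta> / \<alpha>) * \<Omega> powr (- 1 - real CARD('n) / \<alpha>))"
      unfolding Let_def D_def[symmetric] \<Omega>_def[symmetric] using sub crit sup mid far by blast
  qed
qed
end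

section \<open>Normalising the estimates on \<open>G\<close>\<close>

lemma normalised_diag_bound:
  fixes B C1 C2 \<alpha> s :: real and d k :: nat
  assumes "0 < \<alpha>" "0 < s"
    and loc: "s < 1 \<Longrightarrow> B \<le> C1 * s powr (- real (d + k) / \<alpha>)"
    and glob: "B \<le> exp (C2 * s) * max (s powr (- real k / \<alpha>)) 1 * s powr (- real d / \<alpha>)"
  shows "B \<le> (if s < 1 then \<bar>C1\<bar> * s powr (- real (d + k) / \<alpha>) else exp (\<bar>C2\<bar> * s))"
proof (cases "s < 1")
  case True
  have "C1 * s powr (- real (d + k) / \<alpha>) \<le> \<bar>C1\<bar> * s powr (- real (d + k) / \<alpha>)"
    by (intro mult_right_mono) auto
  then show ?thesis using True loc[OF True] by simp
next
  case False
  have max1: "max (s powr (- real k / \<alpha>)) 1 = 1" and pow1: "s powr (- real d / \<alpha>) \<le> 1"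
    using False assms(1) by (auto simp: ge_one_powr_ge_zero powr_minus_divide)
  have "B \<le> exp (C2 * s) * s powr (- real d / \<alpha>)" using glob max1 by simp
  also have "\<dots> \<le> exp (C2 * s)" using pow1 by (simp add: mult_left_le)
  also have "\<dots> \<le> exp (\<bar>C2\<bar> * s)" using assms(2) by (simp add: mult_right_mono)
  finally show ?thesis using False by simp
qed

lemma normalised_offdiag_bound:
  fixes B C1 C2 \<alpha> s r :: real and d k :: nat
  assumes "0 < \<alpha>" "0 < s"
    and loc: "s < 1 \<Longrightarrow> B \<le> C1 * s * r powr (- real (d + k) - \<alpha>)"
    and glob: "B \<le> exp (C2 * s) * max (s powr (- real k / \<alpha>)) 1 * (s * r powr (- real d - \<alpha>))"
  shows "B \<le> (if s < 1 then \<bar>C1\<bar> * s * r powr (- real (d + k) - \<alpha>)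
              else exp (\<bar>C2\<bar> * s) * s * r powr (- real d - \<alpha>))"
proof (cases "s < 1")
  case True
  have "C1 * s * r powr (- real (d + k) - \<alpha>) \<le> \<bar>C1\<bar> * s * r powr (- real (d + k) - \<alpha>)"
    using assms(2) by (intro mult_right_mono) auto
  then show ?thesis using True loc[OF True] by simp
next
  case False
  have "max (s powr (- real k / \<alpha>)) 1 = 1"
    using False assms(1) by (auto simp: ge_one_powr_ge_zero powr_minus_divide)
  then have "B \<le> exp (C2 * s) * (s * r powr (- real d - \<alpha>))" using glob by simp
  also have "\<dots> \<le> exp (\<bar>C2\<bar> * s) * (s * r powr (- real d - \<alpha>))"
    using assms(2) by (intro mult_right_mono) (auto simp: mult_right_mono)
  finally show ?thesis using False by (simp add: mult.assoc)
qed

lemma green_kernel_bounds_intro: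
  fixes G :: "real \<Rightarrow> real^'n \<Rightarrow> real^'n \<Rightarrow> real"
  assumes setting: "stable_density \<beta> w" "0 < \<beta>" "\<beta> < 1" "0 < \<alpha>" "\<alpha> < 2" "l \<le> 1"
    and G_cont: "continuous_on ({0<..} \<times> UNIV \<times> UNIV) (\<lambda>(s, x, y). G s x y)"
    and G_diff: "l \<ge> 1 \<Longrightarrow> \<forall>s>0. \<forall>y x. (\<lambda>x. G s x y) differentiable (at x)"
    and G_diff_cont: "l \<ge> 1 \<Longrightarrow> \<forall>i. continuous_on ({0<..} \<times> UNIV \<times> UNIV)
                         (\<lambda>(s, x, y). pdiff i (\<lambda>x. G s x y) x)"
    and loc: "\<forall>T0>0. \<exists>C. \<forall>is. length is \<le> l \<longrightarrow>
        (\<forall>s\<in>{0<..<T0}. \<forall>x y.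
           \<bar>Dk is (\<lambda>x. G s x y) x\<bar> \<le> C * s powr (- real (CARD('n) + length is) / \<alpha>) \<and>
           (x \<noteq> y \<longrightarrow> \<bar>Dk is (\<lambda>x. G s x y) x\<bar>
                \<le> C * s * norm (x - y) powr (- real (CARD('n) + length is) - \<alpha>)))"
    and glob: "\<exists>C. \<forall>is. length is \<le> l \<longrightarrow>
        (\<forall>s>0. \<forall>x y.
           \<bar>Dk is (\<lambda>x. G s x y) x\<bar>
              \<le> exp (C * s) * max (s powr (- real (length is) / \<alpha>)) 1 * s powr (- real CARD('n) / \<alpha>) \<and>
           (x \<noteq> y \<longrightarrow> \<bar>Dk is (\<lambda>x. G s x y) x\<bar>
              \<le> exp (C * s) * max (s powr (- real (length is) / \<alpha>)) 1
                 * (s * norm (x - y) powr (- real CARD('n) - \<alpha>))))"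
  shows "\<exists>A1 A2. green_kernel_bounds \<beta> w G \<alpha> A1 A2 l"
proof -
  obtain C1 where C1: "\<forall>is. length is \<le> l \<longrightarrow> (\<forall>s\<in>{0<..<1}. \<forall>x y.
           \<bar>Dk is (\<lambda>x. G s x y) x\<bar> \<le> C1 * s powr (- real (CARD('n) + length is) / \<alpha>) \<and>
           (x \<noteq> y \<longrightarrow> \<bar>Dk is (\<lambda>x. G s x y) x\<bar>
                \<le> C1 * s * norm (x - y) powr (- real (CARD('n) + length is) - \<alpha>)))"
    using loc[rule_format, of 1] by auto
  obtain C2 where C2: "\<forall>is. length is \<le> l \<longrightarrow> (\<forall>s>0. \<forall>x y.
           \<bar>Dk is (\<lambda>x. G s x y) x\<bar>
              \<le> exp (C2 * s) * max (s powr (- real (length is) / \<alpha>)) 1 * s powr (- real CARD('n) / \<alpha>) \<and>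
           (x \<noteq> y \<longrightarrow> \<bar>Dk is (\<lambda>x. G s x y) x\<bar>
              \<le> exp (C2 * s) * max (s powr (- real (length is) / \<alpha>)) 1
                 * (s * norm (x - y) powr (- real CARD('n) - \<alpha>))))"
    using glob by auto
  have "green_kernel_bounds \<beta> w G \<alpha> \<bar>C1\<bar> \<bar>C2\<bar> l"
  proof unfold_locales
    fix "is" :: "'n list" and s :: real and z y :: "real^'n"
    assume len: "length is \<le> l" and s: "0 < s"
    show "\<bar>Dk is (\<lambda>x. G s x y) z\<bar> \<le> (if s < 1
        then \<bar>C1\<bar> * s powr (- real (CARD('n) + length is) / \<alpha>) else exp (\<bar>C2\<bar> * s))"
      by (rule normalised_diag_bound[OF \<open>0 < \<alpha>\<close> s]) (use C1 C2 len s in auto)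
    assume "z \<noteq> y"
    then show "\<bar>Dk is (\<lambda>x. G s x y) z\<bar> \<le> (if s < 1
        then \<bar>C1\<bar> * s * norm (z - y) powr (- real (CARD('n) + length is) - \<alpha>)
        else exp (\<bar>C2\<bar> * s) * s * norm (z - y) powr (- real CARD('n) - \<alpha>))"
      by (intro normalised_offdiag_bound[OF \<open>0 < \<alpha>\<close> s]) (use C1 C2 len s in auto)
  qed (use setting G_cont G_diff G_diff_cont in auto)
  then show ?thesis by blast
qed

theorem mainTheorem9:
  fixes G :: "real \<Rightarrow> real^'n \<Rightarrow> real^'n \<Rightarrow> real"
    and w :: "real \<Rightarrow> real"
    and \<alpha> \<beta> :: real
  defines "d \<equiv> CARD('n)"
    and "l \<equiv> nat (\<lceil>\<alpha>\<rceil> - 1)"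
  assumes alpha: "0 < \<alpha>" "\<alpha> < 2"
    and beta: "0 < \<beta>" "\<beta> < 1"
    and w: "stable_density \<beta> w"
    and G_cont: "continuous_on ({0<..} \<times> UNIV \<times> UNIV) (\<lambda>(s, x, y). G s x y)"
    and G_diff: "l \<ge> 1 \<Longrightarrow> \<forall>s>0. \<forall>y x. (\<lambda>x. G s x y) differentiable (at x)"
    and G_diff_cont: "l \<ge> 1 \<Longrightarrow> \<forall>i. continuous_on ({0<..} \<times> UNIV \<times> UNIV)
                         (\<lambda>(s, x, y). pdiff i (\<lambda>x. G s x y) x)"
    and G_bound_loc: "\<forall>T0>0. \<exists>C. \<forall>is. length is \<le> l \<longrightarrow>
        (\<forall>s\<in>{0<..<T0}. \<forall>x y.
           \<bar>Dk is (\<lambda>x. G s x y) x\<bar> \<le> C * s powr (- real (d + length is) / \<alpha>) \<and>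
           (x \<noteq> y \<longrightarrow> \<bar>Dk is (\<lambda>x. G s x y) x\<bar>
                \<le> C * s * norm (x - y) powr (- real (d + length is) - \<alpha>)))"
    and G_bound_glob: "\<exists>C. \<forall>is. length is \<le> l \<longrightarrow>
        (\<forall>s>0. \<forall>x y.
           \<bar>Dk is (\<lambda>x. G s x y) x\<bar>
              \<le> exp (C * s) * max (s powr (- real (length is) / \<alpha>)) 1 * s powr (- real d / \<alpha>) \<and>
           (x \<noteq> y \<longrightarrow> \<bar>Dk is (\<lambda>x. G s x y) x\<bar>
              \<le> exp (C * s) * max (s powr (- real (length is) / \<alpha>)) 1
                 * (s * norm (x - y) powr (- real d - \<alpha>))))"
  shows "\<exists>C>0. \<forall>is. length is \<le> l \<longrightarrow>
     (\<forall>t\<in>{0<..<1}. \<forall>x y.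
        let k = length is;
            D = \<bar>Dk is (\<lambda>x. Gbeta G w \<beta> t x y) x\<bar>;
            \<Omega> = norm (x - y) powr \<alpha> * t powr (- \<beta>)
        in (\<Omega> \<le> 1 \<longrightarrow>
              (real (d + k) < \<alpha> \<longrightarrow> D \<le> C * t powr (- real (d + k) * \<beta> / \<alpha>)) \<and>
              (real (d + k) = \<alpha> \<and> x \<noteq> y \<longrightarrow> D \<le> C * t powr (- \<beta>) * (\<bar>ln \<Omega>\<bar> + 1)) \<and>
              (real (d + k) > \<alpha> \<and> x \<noteq> y \<longrightarrow>
                 D \<le> C * t powr (- real (d + k) * \<beta> / \<alpha>) * \<Omega> powr (1 - real (d + k) / \<alpha>))) \<and>
           (1 \<le> \<Omega> \<and> \<Omega> \<le> t powr (- \<beta>) \<longrightarrow>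
              D \<le> C * t powr (- real (d + k) * \<beta> / \<alpha>) * \<Omega> powr (- 1 - real (d + k) / \<alpha>)) \<and>
           (\<Omega> \<ge> t powr (- \<beta>) \<longrightarrow>
              D \<le> C * t powr (- real d * \<beta> / \<alpha>) * \<Omega> powr (- 1 - real d / \<alpha>)))"
proof -
  have l_le_1: "l \<le> 1"
  proof -
    have "\<lceil>\<alpha>\<rceil> \<le> 2" using alpha by (simp add: ceiling_le_iff)
    then show ?thesis unfolding l_def by linarith
  qed
  obtain A1 A2 where "green_kernel_bounds \<beta> w G \<alpha> A1 A2 l"
    using green_kernel_bounds_intro[OF w beta alpha l_le_1 G_cont G_diff G_diff_cont
        G_bound_loc[unfolded d_def] G_bound_glob[unfolded d_def]] by blast
  then interpret green_kernel_bounds \<beta> w G \<alpha> A1 A2 l .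
  show ?thesis using Gbeta_derivative_bounds unfolding d_def .
qed

end
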